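(* Let $\theta,\omega\in H^\infty$ be inner functions with $\theta(0)=0$ and $\omega(0)=0$. Let $u\in\mathcal K_\omega$ and $T=S_\omega+(\cdot,\overline\chi\omega)u\in\mathcal L(\mathcal K_\omega)$. Let $X\in\mathcal L(\mathcal K_\theta,\mathcal K_\omega)$ satisfy $X^\ast(\overline\chi\omega)=\overline\chi\theta$ and $XU_{(\theta)1}=TX$. Set $g=\dfrac{u-\omega}{1-\theta}$. Then $g\in\mathcal K_\omega$ and $Xf=gf$ for every $f\in\mathcal K_\theta$.
   Context: $m$ is normalized Lebesgue measure on $\mathbb T$; $H^2$ is the Hardy space of the unit disk $\mathbb D$, identified with a subspace of $L^2(m)$ via boundary values, with the $L^2(m)$ inner product. $\chi(z)=z$, $\mathbf 1(z)=1$. For an inner function $\theta$, $\mathcal K_\theta=H^2\ominus\theta H^2$; $S$ is multiplication by $\chi$ on $H^2$ and $S_\theta=P_{\mathcal K_\theta}S|_{\mathcal K_\theta}$. $\overline\chi\theta$ denotes the function $\zeta\mapsto\overline\zeta\theta(\zeta)$ on $\mathbb T$; when $\theta(0)=0$, both $\mathbf 1$ and $\overline\chi\theta$ belong to $\mathcal K_\theta$. $(\cdot,v)u$ denotes the operator $f\mapsto (f,v)u$. For $\theta(0)=0$ and $c\in\mathbb T$, $U_{(\theta)c}=S_\theta+c(\cdot,\overline\chi\theta)\mathbf 1\in\mathcal L(\mathcal K_\theta)$ (a unitary operator). *)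

theory Defs
  imports "HOL-Analysis.Analysis"
begin

text \<open>Functions on T are represented as functions complex => complex; only their
values on the unit circle matter (m is concentrated on T). m is the image of
normalized Lebesgue measure on [0, 2 pi] under t |-> exp(i t).\<close>

definition circ_measure :: "complex measure" where
  "circ_measure = distr (density lborel (\<lambda>t. ennreal (indicator {0..2*pi} t / (2*pi))))
                        borel (\<lambda>t. cis t)"

definition ae_eq :: "(complex \<Rightarrow> complex) \<Rightarrow> (complex \<Rightarrow> complex) \<Rightarrow> bool" where
  "ae_eq f g \<longleftrightarrow> (AE z in circ_measure. f z = g z)"

definition L2 :: "(complex \<Rightarrow> complex) set" where
  "L2 = {f. f \<in> borel_measurable circ_measure \<and>
            integrable circ_measure (\<lambda>z. (cmod (f z))\<^sup>2)}"

definition ip :: "(complex \<Rightarrow> complex) \<Rightarrow> (complex \<Rightarrow> complex) \<Rightarrow> complex" where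
  "ip f g = (LINT z|circ_measure. f z * cnj (g z))"

definition norm2 :: "(complex \<Rightarrow> complex) \<Rightarrow> real" where
  "norm2 f = sqrt (LINT z|circ_measure. (cmod (f z))\<^sup>2)"

text \<open>Hardy space H^2 (boundary values): L^2 functions whose Fourier coefficients
of negative index vanish; the coefficient of index -k is the integral of f z^k.\<close>
definition hardy2 :: "(complex \<Rightarrow> complex) set" where
  "hardy2 = {f \<in> L2. \<forall>k::nat. k > 0 \<longrightarrow> (LINT z|circ_measure. f z * z ^ k) = 0}"

text \<open>Inner functions, via their boundary values: elements of H^infinity
(essentially bounded, analytic: negative Fourier coefficients vanish) with
modulus 1 almost everywhere on T.\<close>
definition inner_fun :: "(complex \<Rightarrow> complex) \<Rightarrow> bool" where
  "inner_fun \<theta> \<longleftrightarrow> \<theta> \<in> borel_measurable circ_measure \<and>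
     (AE z in circ_measure. cmod (\<theta> z) = 1) \<and>
     (\<forall>k::nat. k > 0 \<longrightarrow> (LINT z|circ_measure. \<theta> z * z ^ k) = 0)"

text \<open>Value at the origin = mean of the boundary function (0-th Fourier coefficient).\<close>
definition value_at_0 :: "(complex \<Rightarrow> complex) \<Rightarrow> complex" where
  "value_at_0 \<theta> = (LINT z|circ_measure. \<theta> z)"

definition model_space :: "(complex \<Rightarrow> complex) \<Rightarrow> (complex \<Rightarrow> complex) set" where
  "model_space \<theta> = {f \<in> hardy2. \<forall>h \<in> hardy2. ip f (\<lambda>z. \<theta> z * h z) = 0}"

text \<open>Orthogonal projection onto a (closed) subspace K of L^2: the element p of K
with f - p orthogonal to K (determined up to m-a.e. equality).\<close>
definition proj :: "(complex \<Rightarrow> complex) set \<Rightarrow> (complex \<Rightarrow> complex) \<Rightarrow> (complex \<Rightarrow> complex)" where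
  "proj K f = (SOME p. p \<in> K \<and> (\<forall>k\<in>K. ip (\<lambda>z. f z - p z) k = 0))"

definition comp_shift :: "(complex \<Rightarrow> complex) \<Rightarrow> (complex \<Rightarrow> complex) \<Rightarrow> (complex \<Rightarrow> complex)" where
  "comp_shift \<theta> f = proj (model_space \<theta>) (\<lambda>z. z * f z)"

definition cchi_mult :: "(complex \<Rightarrow> complex) \<Rightarrow> (complex \<Rightarrow> complex)" where
  "cchi_mult \<theta> = (\<lambda>z. cnj z * \<theta> z)"

definition clark_U :: "(complex \<Rightarrow> complex) \<Rightarrow> complex \<Rightarrow> (complex \<Rightarrow> complex) \<Rightarrow> (complex \<Rightarrow> complex)" where
  "clark_U \<theta> c f = (\<lambda>z. comp_shift \<theta> f z + c * ip f (cchi_mult \<theta>))"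

text \<open>Bounded linear operators K1 -> K2, acting on representatives and compatible
with m-a.e. equality.\<close>
definition bounded_op ::
  "(complex \<Rightarrow> complex) set \<Rightarrow> (complex \<Rightarrow> complex) set \<Rightarrow>
   ((complex \<Rightarrow> complex) \<Rightarrow> (complex \<Rightarrow> complex)) \<Rightarrow> bool" where
  "bounded_op K1 K2 X \<longleftrightarrow>
     (\<forall>f\<in>K1. X f \<in> K2) \<and>
     (\<forall>f\<in>K1. \<forall>g\<in>K1. ae_eq f g \<longrightarrow> ae_eq (X f) (X g)) \<and>
     (\<forall>f\<in>K1. \<forall>g\<in>K1. ae_eq (X (\<lambda>z. f z + g z)) (\<lambda>z. X f z + X g z)) \<and>
     (\<forall>f\<in>K1. \<forall>c. ae_eq (X (\<lambda>z. c * f z)) (\<lambda>z. c * X f z)) \<and>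
     (\<exists>C. \<forall>f\<in>K1. norm2 (X f) \<le> C * norm2 f)"

end

theory Submission
  imports Defs
begin

text \<open>Put \<open>D f = (1 - \<theta>) X f - (u - \<omega>) f\<close>. On the circle \<open>S\<^sub>\<omega> h = z h - (h, cnj \<chi> \<omega>) \<omega>\<close> and
  \<open>U\<^sub>(\<^sub>\<theta>\<^sub>)\<^sub>1 f = z f + (f, cnj \<chi> \<theta>) (1 - \<theta>)\<close>, so the two hypotheses on \<open>X\<close> say exactly that
  \<open>D (U f) = z D f\<close>. As \<open>U\<close> maps \<open>K\<^sub>\<theta>\<close> onto itself, each \<open>D f\<close> is \<open>z\<^sup>n D h\<close> for every \<open>n\<close>;
  being a sum of products of \<open>H\<^sup>2\<close> functions it has no negative frequencies, hence no Fourier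
  coefficients at all, and vanishes. Since \<open>\<theta>(0) = 0\<close> forces \<open>\<theta> \<noteq> 1\<close> almost everywhere, this
  gives \<open>X f = g f\<close>, and \<open>g = X 1 \<in> K\<^sub>\<omega>\<close>.\<close>

section \<open>The measure on the unit circle\<close>

lemma sets_circ_measure [simp, measurable_cong]: "sets circ_measure = sets borel"
  unfolding circ_measure_def by simp

lemma space_circ_measure [simp]: "space circ_measure = UNIV"
  using sets_eq_imp_space_eq[OF sets_circ_measure] by simp

lemma measurable_circ_measure [simp]: "measurable circ_measure N = measurable borel N"
  by (rule measurable_cong_sets) auto

lemma cis_measurable [measurable]: "cis \<in> borel_measurable borel"
  by (intro borel_measurable_continuous_onI continuous_intros)

lemma cnj_measurable [measurable]: "cnj \<in> borel_measurable borel"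
  by (intro borel_measurable_continuous_onI continuous_intros)

lemma sgn_complex_measurable [measurable]: "(sgn :: complex \<Rightarrow> complex) \<in> borel_measurable borel"
  unfolding sgn_div_norm by measurable

lemma power_int_measurable [measurable]: "(\<lambda>z::complex. z powi n) \<in> borel_measurable borel"
  unfolding power_int_def by simp

lemma integral_circ_measure:
  fixes f :: "complex \<Rightarrow> 'b::{banach, second_countable_topology}"
  assumes [measurable]: "f \<in> borel_measurable borel"
  shows "integral\<^sup>L circ_measure f =
    (1/(2*pi)) *\<^sub>R integral\<^sup>L lborel (\<lambda>t. indicator {0..2*pi} t *\<^sub>R f (cis t))"
proof -
  have "integral\<^sup>L circ_measure f =
     integral\<^sup>L (density lborel (\<lambda>t. ennreal (indicator {0..2*pi} t / (2*pi)))) (\<lambda>t. f (cis t))"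
    unfolding circ_measure_def by (rule integral_distr) measurable
  also have "\<dots> = integral\<^sup>L lborel (\<lambda>t. (indicator {0..2*pi} t / (2*pi)) *\<^sub>R f (cis t))"
    by (rule integral_density) simp_all
  also have "\<dots> = integral\<^sup>L lborel (\<lambda>t. (1/(2*pi)) *\<^sub>R (indicator {0..2*pi} t *\<^sub>R f (cis t)))"
    by (rule arg_cong[where f="integral\<^sup>L lborel"]) (auto simp: fun_eq_iff)
  finally show ?thesis by (simp only: integral_scaleR_right)
qed

lemma emeasure_circ_measure_UNIV: "emeasure circ_measure UNIV = 1"
proof -
  have "emeasure circ_measure UNIV =
     emeasure (density lborel (\<lambda>t. ennreal (indicator {0..2*pi} t / (2*pi)))) UNIV"
    unfolding circ_measure_def by (subst emeasure_distr) auto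
  also have "\<dots> = (\<integral>\<^sup>+ t. ennreal (1/(2*pi)) * indicator {0..2*pi} t \<partial>lborel)"
    by (subst emeasure_density) (auto intro!: nn_integral_cong split: split_indicator)
  also have "\<dots> = ennreal (1/(2*pi)) * ennreal (2*pi)"
    by (subst nn_integral_cmult_indicator) auto
  also have "\<dots> = 1"
    by (simp add: ennreal_mult[symmetric] del: ennreal_mult)
  finally show ?thesis .
qed

interpretation circ: finite_measure circ_measure
  by (rule finite_measureI) (simp add: emeasure_circ_measure_UNIV)

lemma measure_circ_measure_UNIV [simp]: "measure circ_measure UNIV = 1"
  by (simp add: measure_def emeasure_circ_measure_UNIV)

lemma AE_circ_norm_eq_1: "AE z in circ_measure. cmod z = 1"
  unfolding circ_measure_def by (subst AE_distr_iff) auto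

lemma AE_circ_cnj_eq_inverse: "AE z in circ_measure. z \<noteq> 0 \<and> cnj z = inverse z \<and> cnj z * z = 1"
  using AE_circ_norm_eq_1
proof eventually_elim
  case (elim z)
  then have "cnj z * z = 1"
    by (metis complex_norm_square mult.commute of_real_1 power_one)
  moreover have "z \<noteq> 0" using elim by auto
  ultimately show ?case by (auto simp: field_simps)
qed

lemma AE_circ_cnj_power_int: "AE z in circ_measure. cnj (z powi m) = z powi (- m)"
  using AE_circ_cnj_eq_inverse
  by eventually_elim (simp add: power_int_minus power_int_inverse complex_cnj_power_int)

lemma AE_circ_norm_power_int: "AE z in circ_measure. cmod (z powi n) = 1"
  using AE_circ_norm_eq_1 by eventually_elim (simp add: norm_power_int)

lemma AE_circ_norm_power: "AE z in circ_measure. cmod (z ^ n) = 1"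
  using AE_circ_norm_eq_1 by eventually_elim (simp add: norm_power)

lemma has_vector_derivative_cis_scaled:
  fixes c :: real
  assumes "c \<noteq> 0"
  shows "((\<lambda>t. cis (c*t) / (\<i>*c)) has_vector_derivative cis (c*t)) (at t within S)"
proof -
  have "((\<lambda>t. exp (\<i> * complex_of_real (c*t)) / (\<i>*c)) has_vector_derivative
        (\<i> * c * exp (\<i> * complex_of_real (c*t)) / (\<i>*c))) (at t within S)"
    by (auto intro!: derivative_eq_intros has_vector_derivative_real_field
             simp: mult.commute mult.left_commute)
  then show ?thesis using assms by (simp add: cis_conv_exp)
qed

lemma integral_circ_power_int: "integral\<^sup>L circ_measure (\<lambda>z. z powi n) = (if n = 0 then 1 else 0)"
proof (cases "n = 0")
  case False
  then have n: "real_of_int n \<noteq> 0" by simp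
  have "integral\<^sup>L lborel (\<lambda>t. indicator {0..2*pi} t *\<^sub>R cis (of_int n * t)) =
     cis (of_int n * (2*pi)) / (\<i> * of_int n) - cis (of_int n * 0) / (\<i> * of_int n)"
    by (rule integral_FTC_atLeastAtMost)
       (auto intro!: continuous_intros has_vector_derivative_cis_scaled[OF n, simplified])
  also have "cis (of_int n * (2*pi)) = 1"
    using cos_int_2pin[of n] sin_int_2pin[of n] by (simp add: complex_eq_iff mult.commute)
  finally show ?thesis
    using False by (subst integral_circ_measure) (auto simp: cis_power_int)
qed simp

lemma integral_circ_power: "integral\<^sup>L circ_measure (\<lambda>z. z ^ k) = (if k = 0 then 1 else 0)"
  using integral_circ_power_int[of "int k"] by (simp add: power_int_of_nat)

lemma integral_circ_power_int_cnj:
  "integral\<^sup>L circ_measure (\<lambda>z. z powi n * cnj (z powi m)) = (if n = m then 1 else 0)"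
proof -
  have "AE z in circ_measure. z powi n * cnj (z powi m) = z powi (n - m)"
    using AE_circ_cnj_power_int[of m] AE_circ_cnj_eq_inverse
    by eventually_elim (simp add: power_int_add[symmetric])
  then have "integral\<^sup>L circ_measure (\<lambda>z. z powi n * cnj (z powi m)) =
             integral\<^sup>L circ_measure (\<lambda>z. z powi (n - m))"
    by (intro integral_cong_AE) auto
  then show ?thesis by (simp add: integral_circ_power_int)
qed


section \<open>Square integrable functions on the circle\<close>

lemma L2_measurable [measurable_dest]: "f \<in> L2 \<Longrightarrow> f \<in> borel_measurable borel"
  unfolding L2_def by simp

lemma L2_square_integrable: "f \<in> L2 \<Longrightarrow> integrable circ_measure (\<lambda>z. (cmod (f z))\<^sup>2)"
  unfolding L2_def by simp

lemma L2I: "f \<in> borel_measurable borel \<Longrightarrow> integrable circ_measure (\<lambda>z. (cmod (f z))\<^sup>2) \<Longrightarrow> f \<in> L2"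
  unfolding L2_def by simp

lemma L2_ae_eq: "f \<in> L2 \<Longrightarrow> g \<in> borel_measurable borel \<Longrightarrow> ae_eq f g \<Longrightarrow> g \<in> L2"
  unfolding ae_eq_def
  by (rule L2I) (auto intro: integrable_cong_AE_imp[OF L2_square_integrable] elim!: AE_mp)

lemma integrable_mult_bounded:
  assumes F: "integrable circ_measure F"
    and b: "b \<in> borel_measurable borel" "AE z in circ_measure. cmod (b z) \<le> B"
  shows "integrable circ_measure (\<lambda>z. F z * b z)"
proof (rule Bochner_Integration.integrable_bound)
  show "integrable circ_measure (\<lambda>z. complex_of_real \<bar>B\<bar> * F z)" using F by auto
  show "AE z in circ_measure. norm (F z * b z) \<le> norm (complex_of_real \<bar>B\<bar> * F z)"
    using b(2)
  proof eventually_elim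
    case (elim z)
    have "cmod (F z) * cmod (b z) \<le> cmod (F z) * \<bar>B\<bar>" using elim by (intro mult_left_mono) auto
    then show ?case by (simp add: norm_mult mult.commute)
  qed
  show "(\<lambda>z. F z * b z) \<in> borel_measurable circ_measure" using F b(1) by auto
qed

lemma L2_mult_bounded:
  assumes b: "b \<in> borel_measurable borel" "AE z in circ_measure. cmod (b z) \<le> B" and f: "f \<in> L2"
  shows "(\<lambda>z. b z * f z) \<in> L2"
proof (rule L2I)
  show "(\<lambda>z. b z * f z) \<in> borel_measurable borel" using b(1) L2_measurable[OF f] by simp
  show "integrable circ_measure (\<lambda>z. (cmod (b z * f z))\<^sup>2)"
  proof (rule Bochner_Integration.integrable_bound)
    show "integrable circ_measure (\<lambda>z. B\<^sup>2 * (cmod (f z))\<^sup>2)"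
      using L2_square_integrable[OF f] by simp
    show "(\<lambda>z. (cmod (b z * f z))\<^sup>2) \<in> borel_measurable circ_measure"
      using b(1) L2_measurable[OF f] by simp
    show "AE z in circ_measure. norm ((cmod (b z * f z))\<^sup>2) \<le> norm (B\<^sup>2 * (cmod (f z))\<^sup>2)"
      using b(2)
    proof eventually_elim
      case (elim z)
      have "(cmod (b z))\<^sup>2 \<le> B\<^sup>2" using power_mono[OF elim norm_ge_zero, of 2] by simp
      then have "(cmod (b z))\<^sup>2 * (cmod (f z))\<^sup>2 \<le> B\<^sup>2 * (cmod (f z))\<^sup>2"
        by (rule mult_right_mono) simp
      then show ?case by (simp add: norm_mult power_mult_distrib)
    qed
  qed
qed

lemma L2_bounded:
  assumes "f \<in> borel_measurable borel" "AE z in circ_measure. cmod (f z) \<le> B"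
  shows "f \<in> L2"
proof -
  have "(\<lambda>z. 1) \<in> L2" by (rule L2I) auto
  then show ?thesis using L2_mult_bounded[OF assms, of "\<lambda>z. 1"] by simp
qed

lemma L2_const [simp]: "(\<lambda>z. c) \<in> L2"
  by (rule L2_bounded[where B="cmod c"]) auto

lemma L2_power_int: "(\<lambda>z. z powi n) \<in> L2"
  using AE_circ_norm_power_int[of n] by (intro L2_bounded[where B=1]) (auto elim: AE_mp)

lemma L2_cnj: "f \<in> L2 \<Longrightarrow> (\<lambda>z. cnj (f z)) \<in> L2"
  unfolding L2_def by auto

lemma L2_cmult: "f \<in> L2 \<Longrightarrow> (\<lambda>z. c * f z) \<in> L2"
  using L2_mult_bounded[of "\<lambda>z. c" "cmod c" f] by simp

lemma norm_sq_add_le: "(cmod (a + b))\<^sup>2 \<le> 2 * (cmod a)\<^sup>2 + 2 * (cmod b)\<^sup>2"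
proof -
  have "(cmod (a + b))\<^sup>2 \<le> (cmod a + cmod b)\<^sup>2"
    using power_mono[OF norm_triangle_ineq norm_ge_zero] by blast
  then show ?thesis using sum_squares_bound[of "cmod a" "cmod b"] by (simp add: power2_sum)
qed

lemma L2_add:
  assumes f: "f \<in> L2" and g: "g \<in> L2"
  shows "(\<lambda>z. f z + g z) \<in> L2"
proof (rule L2I)
  show "integrable circ_measure (\<lambda>z. (cmod (f z + g z))\<^sup>2)"
  proof (rule Bochner_Integration.integrable_bound)
    show "integrable circ_measure (\<lambda>z. 2 * (cmod (f z))\<^sup>2 + 2 * (cmod (g z))\<^sup>2)"
      using L2_square_integrable[OF f] L2_square_integrable[OF g] by simp
    show "AE z in circ_measure. norm ((cmod (f z + g z))\<^sup>2) \<le> norm (2 * (cmod (f z))\<^sup>2 + 2 * (cmod (g z))\<^sup>2)"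
      using norm_sq_add_le by (intro AE_I2) simp
    show "(\<lambda>z. (cmod (f z + g z))\<^sup>2) \<in> borel_measurable circ_measure"
      using L2_measurable[OF f] L2_measurable[OF g] by simp
  qed
  show "(\<lambda>z. f z + g z) \<in> borel_measurable borel"
    using L2_measurable[OF f] L2_measurable[OF g] by simp
qed

lemma L2_diff: "f \<in> L2 \<Longrightarrow> g \<in> L2 \<Longrightarrow> (\<lambda>z. f z - g z) \<in> L2"
  using L2_add[of f "\<lambda>z. (-1) * g z"] L2_cmult[of g "-1"] by simp

lemma integrable_L2_mult:
  assumes f: "f \<in> L2" and g: "g \<in> L2"
  shows "integrable circ_measure (\<lambda>z. f z * g z)"
proof (rule Bochner_Integration.integrable_bound)
  show "integrable circ_measure (\<lambda>z. (cmod (f z))\<^sup>2 + (cmod (g z))\<^sup>2)"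
    using L2_square_integrable[OF f] L2_square_integrable[OF g] by simp
  show "AE z in circ_measure. norm (f z * g z) \<le> norm ((cmod (f z))\<^sup>2 + (cmod (g z))\<^sup>2)"
  proof (rule AE_I2)
    fix z
    have "cmod (f z) * cmod (g z) \<le> (cmod (f z))\<^sup>2 + (cmod (g z))\<^sup>2"
      using sum_squares_bound[of "cmod (f z)" "cmod (g z)"]
        mult_nonneg_nonneg[OF norm_ge_zero norm_ge_zero, of "f z" "g z"] by linarith
    then show "norm (f z * g z) \<le> norm ((cmod (f z))\<^sup>2 + (cmod (g z))\<^sup>2)"
      by (simp add: norm_mult)
  qed
  show "(\<lambda>z. f z * g z) \<in> borel_measurable circ_measure"
    using L2_measurable[OF f] L2_measurable[OF g] by simp
qed

lemma integrable_L2: "f \<in> L2 \<Longrightarrow> integrable circ_measure f"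
  using integrable_L2_mult[of f "\<lambda>z. 1"] by simp

lemma integrable_L2_mult_cnj: "f \<in> L2 \<Longrightarrow> g \<in> L2 \<Longrightarrow> integrable circ_measure (\<lambda>z. f z * cnj (g z))"
  by (rule integrable_L2_mult[OF _ L2_cnj])

lemma integrable_L2_mult_power: "f \<in> L2 \<Longrightarrow> integrable circ_measure (\<lambda>z. f z * z ^ k)"
  using AE_circ_norm_power[of k] by (intro integrable_mult_bounded[OF integrable_L2, of _ _ 1]) auto

lemma of_real_norm_sq: "complex_of_real ((cmod w)\<^sup>2) = w * cnj w"
  using complex_norm_square[of w] by simp

lemma L2_norm_sq_eq_0:
  assumes "f \<in> L2" "integral\<^sup>L circ_measure (\<lambda>z. f z * cnj (f z)) = 0"
  shows "AE z in circ_measure. f z = 0"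
proof -
  have "complex_of_real (integral\<^sup>L circ_measure (\<lambda>z. (cmod (f z))\<^sup>2)) = 0"
    using assms(2) unfolding integral_complex_of_real[symmetric] of_real_norm_sq .
  then show ?thesis
    using integral_nonneg_eq_0_iff_AE[OF L2_square_integrable[OF assms(1)]] by simp
qed

lemma L2_pythagoras:
  assumes x: "x \<in> L2" and y: "y \<in> L2" and orth: "integral\<^sup>L circ_measure (\<lambda>z. x z * cnj (y z)) = 0"
  shows "integral\<^sup>L circ_measure (\<lambda>z. (cmod (x z - y z))\<^sup>2) =
         integral\<^sup>L circ_measure (\<lambda>z. (cmod (x z))\<^sup>2) + integral\<^sup>L circ_measure (\<lambda>z. (cmod (y z))\<^sup>2)"
proof -
  have orth': "integral\<^sup>L circ_measure (\<lambda>z. y z * cnj (x z)) = 0"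
    using orth Bochner_Integration.integral_cnj[of circ_measure "\<lambda>z. x z * cnj (y z)"]
    by (simp add: mult.commute)
  have expand: "complex_of_real ((cmod (x z - y z))\<^sup>2) =
      (x z * cnj (x z) + y z * cnj (y z)) - (x z * cnj (y z) + y z * cnj (x z))" for z
    unfolding of_real_norm_sq by (simp add: algebra_simps)
  have "complex_of_real (integral\<^sup>L circ_measure (\<lambda>z. (cmod (x z - y z))\<^sup>2)) =
      (integral\<^sup>L circ_measure (\<lambda>z. x z * cnj (x z)) + integral\<^sup>L circ_measure (\<lambda>z. y z * cnj (y z)))
       - (integral\<^sup>L circ_measure (\<lambda>z. x z * cnj (y z)) + integral\<^sup>L circ_measure (\<lambda>z. y z * cnj (x z)))"
    unfolding integral_complex_of_real[symmetric] expand using x y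
    by (simp add: integrable_L2_mult_cnj Bochner_Integration.integral_add Bochner_Integration.integral_diff)
  also have "\<dots> = complex_of_real (integral\<^sup>L circ_measure (\<lambda>z. (cmod (x z))\<^sup>2)
                                   + integral\<^sup>L circ_measure (\<lambda>z. (cmod (y z))\<^sup>2))"
    unfolding orth orth' of_real_norm_sq[symmetric] integral_complex_of_real by simp
  finally show ?thesis by (simp only: of_real_eq_iff)
qed

lemma norm_integral_mult_cnj_le:
  assumes f: "f \<in> L2" and x: "x \<in> L2" and t: "t > 0"
  shows "cmod (integral\<^sup>L circ_measure (\<lambda>z. f z * cnj (x z))) \<le>
         t / 2 * integral\<^sup>L circ_measure (\<lambda>z. (cmod (f z))\<^sup>2)
         + integral\<^sup>L circ_measure (\<lambda>z. (cmod (x z))\<^sup>2) / (2 * t)"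
proof -
  have am_gm: "u * v \<le> t * u\<^sup>2 / 2 + v\<^sup>2 / (2 * t)" for u v :: real
  proof -
    have "0 \<le> (t * u - v)\<^sup>2 / (2 * t)" using t by simp
    also have "\<dots> = t * u\<^sup>2 / 2 + v\<^sup>2 / (2 * t) - u * v"
      using t by (simp add: field_simps power2_eq_square)
    finally show ?thesis by simp
  qed
  have "cmod (integral\<^sup>L circ_measure (\<lambda>z. f z * cnj (x z))) \<le>
        integral\<^sup>L circ_measure (\<lambda>z. cmod (f z * cnj (x z)))"
    by (rule integral_norm_bound)
  also have "\<dots> \<le> integral\<^sup>L circ_measure (\<lambda>z. t * (cmod (f z))\<^sup>2 / 2 + (cmod (x z))\<^sup>2 / (2 * t))"
  proof (rule integral_mono)
    show "integrable circ_measure (\<lambda>z. cmod (f z * cnj (x z)))"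
      using integrable_L2_mult_cnj[OF f x] by (rule integrable_norm)
    show "integrable circ_measure (\<lambda>z. t * (cmod (f z))\<^sup>2 / 2 + (cmod (x z))\<^sup>2 / (2 * t))"
      using L2_square_integrable[OF f] L2_square_integrable[OF x] by simp
    show "cmod (f z * cnj (x z)) \<le> t * (cmod (f z))\<^sup>2 / 2 + (cmod (x z))\<^sup>2 / (2 * t)" for z
      using am_gm[of "cmod (f z)" "cmod (x z)"] by (simp add: norm_mult)
  qed
  also have "\<dots> = t / 2 * integral\<^sup>L circ_measure (\<lambda>z. (cmod (f z))\<^sup>2)
                 + integral\<^sup>L circ_measure (\<lambda>z. (cmod (x z))\<^sup>2) / (2 * t)"
    using L2_square_integrable[OF f] L2_square_integrable[OF x]
    by (simp add: Bochner_Integration.integral_add)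
  finally show ?thesis .
qed

lemma L2_inner_eq_0_if_small_representatives:
  assumes f: "f \<in> L2"
    and small: "\<And>\<delta>. \<delta> > 0 \<Longrightarrow> \<exists>x\<in>L2. integral\<^sup>L circ_measure (\<lambda>z. f z * cnj (x z)) = I
                                  \<and> integral\<^sup>L circ_measure (\<lambda>z. (cmod (x z))\<^sup>2) < \<delta>"
  shows "I = 0"
proof -
  define A where "A = integral\<^sup>L circ_measure (\<lambda>z. (cmod (f z))\<^sup>2)"
  have A: "A \<ge> 0" unfolding A_def by simp
  have "cmod I \<le> e" if e: "e > 0" for e
  proof -
    define t where "t = e / (A + 1)"
    have t: "t > 0" unfolding t_def using e A by simp
    obtain x where x: "x \<in> L2" "integral\<^sup>L circ_measure (\<lambda>z. f z * cnj (x z)) = I"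
        "integral\<^sup>L circ_measure (\<lambda>z. (cmod (x z))\<^sup>2) < e * t"
      using small[of "e * t"] e t by auto
    have "cmod I \<le> t / 2 * A + integral\<^sup>L circ_measure (\<lambda>z. (cmod (x z))\<^sup>2) / (2 * t)"
      using norm_integral_mult_cnj_le[OF f x(1) t] unfolding x(2) A_def .
    also have "\<dots> \<le> t / 2 * A + e * t / (2 * t)"
      using x(3) t by (intro add_left_mono divide_right_mono) auto
    also have "\<dots> \<le> e / 2 + e / 2"
    proof -
      have "t * A = e * (A / (A + 1))" unfolding t_def by simp
      also have "\<dots> \<le> e * 1" using e A by (intro mult_left_mono) auto
      finally have "t * A \<le> e" by simp
      moreover have "e * t / (2 * t) = e / 2" using t by simp
      ultimately show ?thesis by linarith
    qed
    finally show ?thesis by simp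
  qed
  then have "cmod I \<le> 0" by (rule field_le_epsilon) simp
  then show ?thesis by simp
qed

lemma ae_eq_sym: "ae_eq f g \<Longrightarrow> ae_eq g f"
  unfolding ae_eq_def by (auto elim: AE_mp)

lemma ae_eq_trans: "ae_eq f g \<Longrightarrow> ae_eq g h \<Longrightarrow> ae_eq f h"
  unfolding ae_eq_def by (auto elim: AE_mp)


section \<open>Trigonometric polynomials\<close>

declare complex_cnj_power_int [simp del]

text \<open>On the circle \<open>z powi n\<close> is the character \<open>t \<mapsto> exp (i n t)\<close>.\<close>

definition trigpoly :: "(int \<times> complex) list \<Rightarrow> complex \<Rightarrow> complex" where
  "trigpoly L z = (\<Sum>(n,c)\<leftarrow>L. c * z powi n)"

lemma trigpoly_Nil [simp]: "trigpoly [] z = 0"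
  by (simp add: trigpoly_def)

lemma trigpoly_Cons [simp]: "trigpoly ((n,c) # L) z = c * z powi n + trigpoly L z"
  by (simp add: trigpoly_def)

lemma trigpoly_append [simp]: "trigpoly (L @ M) z = trigpoly L z + trigpoly M z"
  by (simp add: trigpoly_def)

lemma trigpoly_scale: "trigpoly (map (\<lambda>(n,c). (n, a * c)) L) z = a * trigpoly L z"
  by (induction L) (auto simp: algebra_simps)

lemma trigpoly_filter:
  "trigpoly (filter P L) z + trigpoly (filter (\<lambda>x. \<not> P x) L) z = trigpoly L z"
  by (induction L) (auto simp: algebra_simps)

definition trigpoly_mult :: "(int \<times> complex) list \<Rightarrow> (int \<times> complex) list \<Rightarrow> (int \<times> complex) list" where
  "trigpoly_mult L M = concat (map (\<lambda>(n,c). map (\<lambda>(m,d). (n+m, c*d)) M) L)"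

lemma trigpoly_mult:
  assumes "z \<noteq> 0"
  shows "trigpoly (trigpoly_mult L M) z = trigpoly L z * trigpoly M z"
proof -
  have shifted: "trigpoly (map (\<lambda>(m,d). (n+m, c*d)) M) z = c * z powi n * trigpoly M z" for n c
    using assms by (induction M) (auto simp: algebra_simps power_int_add)
  show ?thesis
    unfolding trigpoly_mult_def by (induction L) (auto simp: shifted algebra_simps)
qed

lemma trigpoly_measurable [measurable]: "trigpoly L \<in> borel_measurable borel"
  unfolding trigpoly_def by (induction L) auto

lemma norm_trigpoly_le:
  assumes "cmod z = 1"
  shows "cmod (trigpoly L z) \<le> (\<Sum>(n,c)\<leftarrow>L. cmod c)"
proof (induction L)
  case (Cons a L)
  obtain n c where a: "a = (n,c)" by (cases a)
  have "cmod (c * z powi n + trigpoly L z) \<le> cmod c + cmod (trigpoly L z)"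
    using assms by (metis mult.right_neutral norm_mult norm_power_int power_int_1_left norm_triangle_ineq)
  then show ?case using Cons a by simp
qed simp

lemma AE_circ_norm_trigpoly_le: "AE z in circ_measure. cmod (trigpoly L z) \<le> (\<Sum>(n,c)\<leftarrow>L. cmod c)"
  using AE_circ_norm_eq_1 by eventually_elim (rule norm_trigpoly_le)

lemma L2_trigpoly: "trigpoly L \<in> L2"
  by (rule L2_bounded[OF trigpoly_measurable AE_circ_norm_trigpoly_le])

text \<open>On the circle \<open>Re z = (z + z\<inverse>)/2\<close> and \<open>Im z = (z - z\<inverse>)/(2i)\<close>, so real polynomials in
  \<open>Re z\<close>, \<open>Im z\<close> are trigonometric polynomials.\<close>

lemma real_polynomial_function_trigpoly:
  assumes "real_polynomial_function p"
  shows "\<exists>L. \<forall>z. cmod z = 1 \<longrightarrow> complex_of_real (p z) = trigpoly L z"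
  using assms
proof (induction p)
  case (linear f)
  then interpret bounded_linear f .
  define a where "a = complex_of_real (f 1)"
  define b where "b = complex_of_real (f \<i>)"
  have fz: "f z = Re z * f 1 + Im z * f \<i>" for z
  proof -
    have "z = Re z *\<^sub>R 1 + Im z *\<^sub>R \<i>" by (simp add: complex_eq_iff)
    then have "f z = f (Re z *\<^sub>R 1 + Im z *\<^sub>R \<i>)" by (rule arg_cong)
    also have "\<dots> = Re z * f 1 + Im z * f \<i>" by (simp add: add scale)
    finally show ?thesis .
  qed
  show ?case
  proof (intro exI allI impI)
    fix z :: complex assume z: "cmod z = 1"
    then have inv: "cnj z = z powi (-1)"
      using complex_norm_square[of z] by (simp add: power_int_minus inverse_unique)
    have "complex_of_real (f z) = complex_of_real (Re z) * a + complex_of_real (Im z) * b"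
      unfolding fz[of z] a_def b_def by simp
    also have "\<dots> = ((a - \<i> * b) / 2) * z + ((a + \<i> * b) / 2) * cnj z"
      by (simp add: complex_eq_iff field_simps)
    finally show "complex_of_real (f z) = trigpoly [(1, (a - \<i> * b) / 2), (-1, (a + \<i> * b) / 2)] z"
      using inv by simp
  qed
next
  case (const c)
  show ?case by (rule exI[of _ "[(0, complex_of_real c)]"]) simp
next
  case (add f g)
  then obtain L M where "\<forall>z. cmod z = 1 \<longrightarrow> complex_of_real (f z) = trigpoly L z"
    "\<forall>z. cmod z = 1 \<longrightarrow> complex_of_real (g z) = trigpoly M z" by blast
  then show ?case by (intro exI[of _ "L @ M"]) simp
next
  case (mult f g)
  then obtain L M where LM: "\<forall>z. cmod z = 1 \<longrightarrow> complex_of_real (f z) = trigpoly L z"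
    "\<forall>z. cmod z = 1 \<longrightarrow> complex_of_real (g z) = trigpoly M z" by blast
  show ?case
  proof (intro exI allI impI)
    fix z :: complex assume z: "cmod z = 1"
    then have "z \<noteq> 0" by auto
    then show "complex_of_real (f z * g z) = trigpoly (trigpoly_mult L M) z"
      using LM z by (simp add: trigpoly_mult)
  qed
qed

lemma trigpoly_uniform_approximation:
  fixes \<phi> :: "complex \<Rightarrow> complex"
  assumes "continuous_on (sphere 0 1) \<phi>" "e > 0"
  shows "\<exists>L. \<forall>z. cmod z = 1 \<longrightarrow> cmod (\<phi> z - trigpoly L z) < e"
proof -
  have Re: "continuous_on (sphere 0 1) (\<lambda>z. Re (\<phi> z))"
    and Im: "continuous_on (sphere 0 1) (\<lambda>z. Im (\<phi> z))"
    using assms(1) by (auto intro: continuous_intros)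
  obtain p where p: "real_polynomial_function p" "\<And>z. z \<in> sphere 0 1 \<Longrightarrow> \<bar>Re (\<phi> z) - p z\<bar> < e/2"
    using Stone_Weierstrass_real_polynomial_function[OF compact_sphere Re, of "e/2"] assms(2) by auto
  obtain q where q: "real_polynomial_function q" "\<And>z. z \<in> sphere 0 1 \<Longrightarrow> \<bar>Im (\<phi> z) - q z\<bar> < e/2"
    using Stone_Weierstrass_real_polynomial_function[OF compact_sphere Im, of "e/2"] assms(2) by auto
  have pq: "real_polynomial_function p" "real_polynomial_function q"
      "\<And>z. z \<in> sphere 0 1 \<Longrightarrow> \<bar>Re (\<phi> z) - p z\<bar> < e/2"
      "\<And>z. z \<in> sphere 0 1 \<Longrightarrow> \<bar>Im (\<phi> z) - q z\<bar> < e/2"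
    using p q by auto
  obtain L M where LM: "\<forall>z. cmod z = 1 \<longrightarrow> complex_of_real (p z) = trigpoly L z"
      "\<forall>z. cmod z = 1 \<longrightarrow> complex_of_real (q z) = trigpoly M z"
    using real_polynomial_function_trigpoly[OF pq(1)] real_polynomial_function_trigpoly[OF pq(2)]
    by blast
  show ?thesis
  proof (intro exI allI impI)
    fix z :: complex assume z: "cmod z = 1"
    have "\<phi> z - trigpoly (L @ map (\<lambda>(n,c). (n, \<i> * c)) M) z =
        complex_of_real (Re (\<phi> z) - p z) + \<i> * complex_of_real (Im (\<phi> z) - q z)"
      using LM z by (simp add: trigpoly_scale complex_eq_iff)
    then have "cmod (\<phi> z - trigpoly (L @ map (\<lambda>(n,c). (n, \<i> * c)) M) z) \<le>
        \<bar>Re (\<phi> z) - p z\<bar> + \<bar>Im (\<phi> z) - q z\<bar>"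
      by (metis norm_ii norm_mult norm_of_real norm_triangle_ineq mult_1)
    also have "\<dots> < e" using pq(3)[of z] pq(4)[of z] z by simp
    finally show "cmod (\<phi> z - trigpoly (L @ map (\<lambda>(n,c). (n, \<i> * c)) M) z) < e" .
  qed
qed

lemma integral_mult_cnj_trigpoly_eq_0:
  assumes f: "f \<in> L2"
    and orth: "\<And>n c. (n, c) \<in> set L \<Longrightarrow> integral\<^sup>L circ_measure (\<lambda>z. f z * cnj (z powi n)) = 0"
  shows "integral\<^sup>L circ_measure (\<lambda>z. f z * cnj (trigpoly L z)) = 0"
  using orth
proof (induction L)
  case (Cons a L)
  obtain n c where a: "a = (n, c)" by (cases a)
  have "(\<lambda>z. f z * cnj (trigpoly (a # L) z)) =
        (\<lambda>z. cnj c * (f z * cnj (z powi n)) + f z * cnj (trigpoly L z))"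
    by (auto simp: a algebra_simps)
  then have "integral\<^sup>L circ_measure (\<lambda>z. f z * cnj (trigpoly (a # L) z)) =
      cnj c * integral\<^sup>L circ_measure (\<lambda>z. f z * cnj (z powi n))
      + integral\<^sup>L circ_measure (\<lambda>z. f z * cnj (trigpoly L z))"
    using integrable_L2_mult_cnj[OF f L2_power_int] integrable_L2_mult_cnj[OF f L2_trigpoly]
    by (simp add: Bochner_Integration.integral_add)
  moreover have "integral\<^sup>L circ_measure (\<lambda>z. f z * cnj (trigpoly L z)) = 0"
    using Cons.prems by (intro Cons.IH) auto
  ultimately show ?case using Cons.prems[of n c] a by simp
qed simp

lemma integral_trigpoly_mult_cnj_trigpoly_eq_0:
  assumes disjoint: "\<And>n c m d. (n, c) \<in> set L \<Longrightarrow> (m, d) \<in> set M \<Longrightarrow> n \<noteq> m"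
  shows "integral\<^sup>L circ_measure (\<lambda>z. trigpoly L z * cnj (trigpoly M z)) = 0"
proof (rule integral_mult_cnj_trigpoly_eq_0[OF L2_trigpoly])
  fix m d assume md: "(m, d) \<in> set M"
  have "integral\<^sup>L circ_measure (\<lambda>z. z powi m * cnj (trigpoly L z)) = 0"
    using disjoint[OF _ md]
    by (intro integral_mult_cnj_trigpoly_eq_0[OF L2_power_int]) (auto simp: integral_circ_power_int_cnj)
  then have "integral\<^sup>L circ_measure (\<lambda>z. cnj (z powi m * cnj (trigpoly L z))) = 0"
    by (simp only: Bochner_Integration.integral_cnj) simp
  then show "integral\<^sup>L circ_measure (\<lambda>z. trigpoly L z * cnj (z powi m)) = 0"
    by (simp add: mult.commute)
qed



section \<open>Uniqueness of Fourier coefficients\<close>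

definition continuous_L1_approximable :: "complex measure \<Rightarrow> (complex \<Rightarrow> complex) \<Rightarrow> bool" where
  "continuous_L1_approximable N g \<longleftrightarrow>
     (\<forall>e>0. \<exists>\<phi> B. continuous_on UNIV \<phi> \<and> (\<forall>z. cmod (\<phi> z) \<le> B) \<and>
                 integral\<^sup>L N (\<lambda>z. cmod (g z - \<phi> z)) < e)"

lemma open_superset_measure_approx:
  fixes N :: "complex measure"
  assumes N: "finite_measure N" "sets N = sets borel" and B: "B \<in> sets borel" and d: "d > 0"
  shows "\<exists>U. open U \<and> B \<subseteq> U \<and> measure N U < measure N B + d"
proof -
  interpret finite_measure N by (rule N(1))
  have sp: "space N = UNIV" using sets_eq_imp_space_eq[OF N(2)] by simp
  have "emeasure N B = (INF U \<in> {U. B \<subseteq> U \<and> open U}. emeasure N U)"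
    using outer_regular[OF N(2) _ B] sp emeasure_real by auto
  moreover have "emeasure N B < ennreal (measure N B + d)"
    using d B N(2) by (simp add: emeasure_eq_measure ennreal_less_iff)
  ultimately obtain U where U: "B \<subseteq> U" "open U" "emeasure N U < ennreal (measure N B + d)"
    by (metis (no_types, lifting) INF_less_iff mem_Collect_eq)
  then have "ennreal (measure N U) < ennreal (measure N B + d)"
    by (simp only: emeasure_eq_measure)
  then have "measure N U < measure N B + d"
    using d by (subst (asm) ennreal_less_iff) auto
  then show ?thesis using U by blast
qed

lemma indicator_L1_approximation:
  fixes N :: "complex measure"
  assumes N: "finite_measure N" "sets N = sets borel" and A: "A \<in> sets borel" and d: "d > 0"
  shows "\<exists>f::complex\<Rightarrow>real. continuous_on UNIV f \<and> (\<forall>x. 0 \<le> f x \<and> f x \<le> 1) \<and>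
           integral\<^sup>L N (\<lambda>x. \<bar>indicator A x - f x\<bar>) < d"
proof -
  interpret finite_measure N by (rule N(1))
  have sp: "space N = UNIV" using sets_eq_imp_space_eq[OF N(2)] by simp
  have open_cover: "\<exists>U. open U \<and> B \<subseteq> U \<and> measure N U < measure N B + d/2" if "B \<in> sets borel" for B
    using open_superset_measure_approx[OF N that] d by simp
  obtain U where U: "open U" "A \<subseteq> U" "measure N U < measure N A + d/2"
    using open_cover[OF A] by blast
  have "- A \<in> sets borel" using A by auto
  then obtain V where V: "open V" "- A \<subseteq> V" "measure N V < measure N (- A) + d/2"
    using open_cover by blast
  define K where "K = - V"
  have K: "closed K" "K \<subseteq> A" "K \<subseteq> U" using V U unfolding K_def by auto
  have dis: "K \<inter> - U = {}" using K by auto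
  obtain f :: "complex \<Rightarrow> real" where f: "continuous_on UNIV f" "\<And>x. f x \<in> closed_segment 1 0"
    "\<And>x. x \<in> K \<Longrightarrow> f x = 1" "\<And>x. x \<in> - U \<Longrightarrow> f x = 0"
    using Urysohn[OF K(1) _ dis, of 1 0] U(1) by (auto simp: closed_Compl)
  have f01: "0 \<le> f x \<and> f x \<le> 1" for x using f(2)[of x] by (simp add: closed_segment_eq_real_ivl)
  have sets: "A \<in> sets N" "U \<in> sets N" "K \<in> sets N" "V \<in> sets N"
    using A U(1) K(1) V(1) N(2) by auto
  have bound: "\<bar>indicator A x - f x\<bar> \<le> indicator (U - K) x" for x
  proof (cases "x \<in> K")
    case True then show ?thesis using f(3) K by (auto simp: indicator_def)
  next
    case False
    then show ?thesis
      using f(4)[of x] f01[of x] U(2) by (cases "x \<in> U") (auto simp: indicator_def)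
  qed
  have fm: "f \<in> borel_measurable N"
    unfolding measurable_cong_sets[OF N(2) refl] by (rule borel_measurable_continuous_onI[OF f(1)])
  have "integral\<^sup>L N (\<lambda>x. \<bar>indicator A x - f x\<bar>) \<le> integral\<^sup>L N (indicator (U - K))"
  proof (rule integral_mono)
    show "integrable N (\<lambda>x. \<bar>indicator A x - f x\<bar>)"
      by (rule integrable_const_bound[where B=1]) (use f01 sets fm in \<open>auto simp: indicator_def\<close>)
    show "integrable N (indicator (U - K) :: complex \<Rightarrow> real)"
      using sets by (intro integrable_real_indicator) (auto simp: emeasure_eq_measure)
  qed (rule bound)
  also have "\<dots> = measure N U - measure N K"
    using sets K(3) by (simp add: finite_measure_Diff)
  finally have I: "integral\<^sup>L N (\<lambda>x. \<bar>indicator A x - f x\<bar>) \<le> measure N U - measure N K" .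
  have "measure N K = measure N UNIV - measure N V"
    unfolding K_def using finite_measure_compl[of V] sets sp by (simp add: Compl_eq_Diff_UNIV)
  moreover have "measure N (- A) = measure N UNIV - measure N A"
    using finite_measure_compl[of A] sets sp by (simp add: Compl_eq_Diff_UNIV)
  ultimately have "integral\<^sup>L N (\<lambda>x. \<bar>indicator A x - f x\<bar>) < d" using I U(3) V(3) by linarith
  then show ?thesis using f(1) f01 by blast
qed

lemma integrable_norm_diff_bounded_continuous:
  fixes N :: "complex measure"
  assumes N: "finite_measure N" "sets N = sets borel"
    and g: "integrable N g" and \<phi>: "continuous_on UNIV \<phi>" "\<forall>z. cmod (\<phi> z) \<le> B"
  shows "integrable N (\<lambda>z. cmod (g z - \<phi> z :: complex))"
proof -
  interpret finite_measure N by (rule N(1))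
  have "\<phi> \<in> borel_measurable N"
    unfolding measurable_cong_sets[OF N(2) refl] by (rule borel_measurable_continuous_onI[OF \<phi>(1)])
  then have "integrable N \<phi>" using \<phi>(2) by (rule_tac integrable_const_bound[where B=B]) auto
  then show ?thesis using g by auto
qed

lemma continuous_L1_approximable_indicator:
  fixes N :: "complex measure"
  assumes N: "finite_measure N" "sets N = sets borel" and A: "A \<in> sets N"
  shows "continuous_L1_approximable N (\<lambda>z. indicator A z *\<^sub>R c)"
  unfolding continuous_L1_approximable_def
proof (intro allI impI)
  fix e :: real assume e: "e > 0"
  have "e / (cmod c + 1) > 0" using e by (simp add: add_nonneg_pos)
  moreover have "A \<in> sets borel" using A N(2) by simp
  ultimately obtain f :: "complex \<Rightarrow> real" where f: "continuous_on UNIV f" "\<forall>x. 0 \<le> f x \<and> f x \<le> 1"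
     "integral\<^sup>L N (\<lambda>x. \<bar>indicator A x - f x\<bar>) < e / (cmod c + 1)"
    using indicator_L1_approximation[OF N] by blast
  have "continuous_on UNIV (\<lambda>x. f x *\<^sub>R c)" by (intro continuous_intros f(1))
  moreover have "\<forall>z. cmod (f z *\<^sub>R c) \<le> cmod c" using f(2) by (auto simp: mult_left_le_one_le)
  moreover have "integral\<^sup>L N (\<lambda>z. cmod (indicator A z *\<^sub>R c - f z *\<^sub>R c)) < e"
  proof -
    have "integral\<^sup>L N (\<lambda>z. cmod (indicator A z *\<^sub>R c - f z *\<^sub>R c)) =
          integral\<^sup>L N (\<lambda>x. \<bar>indicator A x - f x\<bar>) * cmod c"
      by (simp add: scaleR_diff_left[symmetric])
    also have "\<dots> \<le> e / (cmod c + 1) * cmod c" using f(3) by (intro mult_right_mono) auto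
    also have "\<dots> < e"
    proof -
      have "cmod c / (cmod c + 1) < 1" by (subst divide_less_eq_1_pos) (auto simp: add_nonneg_pos)
      then have "e * (cmod c / (cmod c + 1)) < e * 1" using e by (rule mult_strict_left_mono)
      then show ?thesis by simp
    qed
    finally show ?thesis .
  qed
  ultimately show "\<exists>\<phi> B. continuous_on UNIV \<phi> \<and> (\<forall>z. cmod (\<phi> z) \<le> B) \<and>
                         integral\<^sup>L N (\<lambda>z. cmod (indicator A z *\<^sub>R c - \<phi> z)) < e"
    by blast
qed

lemma continuous_L1_approximable_add:
  fixes N :: "complex measure"
  assumes N: "finite_measure N" "sets N = sets borel"
    and f: "integrable N f" "continuous_L1_approximable N f"
    and g: "integrable N g" "continuous_L1_approximable N g"
  shows "continuous_L1_approximable N (\<lambda>z. f z + g z)"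
  unfolding continuous_L1_approximable_def
proof (intro allI impI)
  fix e :: real assume e: "e > 0"
  obtain \<phi>1 B1 where \<phi>1: "continuous_on UNIV \<phi>1" "\<forall>z. cmod (\<phi>1 z) \<le> B1"
      "integral\<^sup>L N (\<lambda>z. cmod (f z - \<phi>1 z)) < e/2"
    using f(2) e unfolding continuous_L1_approximable_def by (meson half_gt_zero)
  obtain \<phi>2 B2 where \<phi>2: "continuous_on UNIV \<phi>2" "\<forall>z. cmod (\<phi>2 z) \<le> B2"
      "integral\<^sup>L N (\<lambda>z. cmod (g z - \<phi>2 z)) < e/2"
    using g(2) e unfolding continuous_L1_approximable_def by (meson half_gt_zero)
  have i1: "integrable N (\<lambda>z. cmod (f z - \<phi>1 z))"
    by (rule integrable_norm_diff_bounded_continuous[OF N f(1) \<phi>1(1,2)])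
  have i2: "integrable N (\<lambda>z. cmod (g z - \<phi>2 z))"
    by (rule integrable_norm_diff_bounded_continuous[OF N g(1) \<phi>2(1,2)])
  have c: "continuous_on UNIV (\<lambda>z. \<phi>1 z + \<phi>2 z)" using \<phi>1(1) \<phi>2(1) by (intro continuous_intros)
  have b: "\<forall>z. cmod (\<phi>1 z + \<phi>2 z) \<le> B1 + B2"
    using \<phi>1(2) \<phi>2(2) by (metis add_mono norm_triangle_le)
  have "integral\<^sup>L N (\<lambda>z. cmod (f z + g z - (\<phi>1 z + \<phi>2 z))) \<le>
        integral\<^sup>L N (\<lambda>z. cmod (f z - \<phi>1 z) + cmod (g z - \<phi>2 z))"
  proof (rule integral_mono)
    show "integrable N (\<lambda>z. cmod (f z + g z - (\<phi>1 z + \<phi>2 z)))"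
      using integrable_norm_diff_bounded_continuous[OF N _ c b] f(1) g(1) by auto
    show "cmod (f z + g z - (\<phi>1 z + \<phi>2 z)) \<le> cmod (f z - \<phi>1 z) + cmod (g z - \<phi>2 z)" for z
      by (metis add_diff_add norm_triangle_ineq)
    show "integrable N (\<lambda>z. cmod (f z - \<phi>1 z) + cmod (g z - \<phi>2 z))" using i1 i2 by simp
  qed
  also have "\<dots> < e" using i1 i2 \<phi>1(3) \<phi>2(3) by simp
  finally show "\<exists>\<phi> B. continuous_on UNIV \<phi> \<and> (\<forall>z. cmod (\<phi> z) \<le> B) \<and>
                  integral\<^sup>L N (\<lambda>z. cmod (f z + g z - \<phi> z)) < e"
    using c b by blast
qed

lemma continuous_L1_approximable_limit:
  fixes N :: "complex measure"
  assumes N: "finite_measure N" "sets N = sets borel"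
    and s: "\<And>i. integrable N (s i)" "\<And>i. continuous_L1_approximable N (s i)"
    and lim: "\<And>z. (\<lambda>i. s i z) \<longlonglongrightarrow> f z" and bound: "\<And>i z. cmod (s i z) \<le> 2 * cmod (f z)"
    and f: "integrable N f"
  shows "continuous_L1_approximable N f"
  unfolding continuous_L1_approximable_def
proof (intro allI impI)
  fix e :: real assume e: "e > 0"
  have "(\<lambda>i. integral\<^sup>L N (\<lambda>z. cmod (f z - s i z))) \<longlonglongrightarrow> integral\<^sup>L N (\<lambda>z. 0::real)"
  proof (rule integral_dominated_convergence[where w="\<lambda>z. 3 * cmod (f z)"])
    show "AE z in N. (\<lambda>i. cmod (f z - s i z)) \<longlonglongrightarrow> 0"
    proof (rule AE_I2)
      fix z
      have "(\<lambda>i. cmod (f z - s i z)) \<longlonglongrightarrow> cmod (f z - f z)"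
        by (intro tendsto_intros lim)
      then show "(\<lambda>i. cmod (f z - s i z)) \<longlonglongrightarrow> 0" by simp
    qed
    show "AE z in N. norm (cmod (f z - s i z)) \<le> 3 * cmod (f z)" for i
    proof (rule AE_I2)
      fix z
      have "cmod (f z - s i z) \<le> cmod (f z) + cmod (s i z)" by (rule norm_triangle_ineq4)
      then show "norm (cmod (f z - s i z)) \<le> 3 * cmod (f z)" using bound[of i z] by simp
    qed
    show "(\<lambda>z. 0::real) \<in> borel_measurable N" by simp
    show "(\<lambda>z. cmod (f z - s i z)) \<in> borel_measurable N" for i using f s(1) by auto
    show "integrable N (\<lambda>z. 3 * cmod (f z))" using f by auto
  qed
  then have "(\<lambda>i. integral\<^sup>L N (\<lambda>z. cmod (f z - s i z))) \<longlonglongrightarrow> 0" by simp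
  then obtain i where i: "integral\<^sup>L N (\<lambda>z. cmod (f z - s i z)) < e/2"
    using e by (metis (no_types, lifting) LIMSEQ_D diff_zero half_gt_zero le_refl real_norm_def abs_less_iff)
  obtain \<phi> B where \<phi>: "continuous_on UNIV \<phi>" "\<forall>z. cmod (\<phi> z) \<le> B"
      "integral\<^sup>L N (\<lambda>z. cmod (s i z - \<phi> z)) < e/2"
    using s(2)[of i] e unfolding continuous_L1_approximable_def by (meson half_gt_zero)
  have i1: "integrable N (\<lambda>z. cmod (s i z - \<phi> z))"
    by (rule integrable_norm_diff_bounded_continuous[OF N s(1) \<phi>(1,2)])
  have i2: "integrable N (\<lambda>z. cmod (f z - s i z))" using s(1) f by auto
  have "integral\<^sup>L N (\<lambda>z. cmod (f z - \<phi> z)) \<le>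
        integral\<^sup>L N (\<lambda>z. cmod (f z - s i z) + cmod (s i z - \<phi> z))"
  proof (rule integral_mono)
    show "integrable N (\<lambda>z. cmod (f z - \<phi> z))"
      by (rule integrable_norm_diff_bounded_continuous[OF N f \<phi>(1,2)])
    show "cmod (f z - \<phi> z) \<le> cmod (f z - s i z) + cmod (s i z - \<phi> z)" for z
      by (rule norm_diff_triangle_le[where y="s i z"]) simp_all
    show "integrable N (\<lambda>z. cmod (f z - s i z) + cmod (s i z - \<phi> z))" using i1 i2 by simp
  qed
  also have "\<dots> < e" using i1 i2 i \<phi>(3) by simp
  finally show "\<exists>\<phi> B. continuous_on UNIV \<phi> \<and> (\<forall>z. cmod (\<phi> z) \<le> B) \<and>
                  integral\<^sup>L N (\<lambda>z. cmod (f z - \<phi> z)) < e"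
    using \<phi>(1,2) by blast
qed

lemma integrable_continuous_L1_approximable:
  fixes N :: "complex measure" and g :: "complex \<Rightarrow> complex"
  assumes N: "finite_measure N" "sets N = sets borel" and g: "integrable N g"
  shows "continuous_L1_approximable N g"
  using g
proof (induct rule: integrable_induct)
  case (base A c)
  show ?case using continuous_L1_approximable_indicator[OF N base(1)] by simp
next
  case (add f g)
  then show ?case by (rule continuous_L1_approximable_add[OF N])
next
  case (lim f s)
  have sp: "space N = UNIV" using sets_eq_imp_space_eq[OF N(2)] by simp
  show ?case
    by (rule continuous_L1_approximable_limit[OF N, of s]) (use lim sp in simp_all)
qed

lemma integral_mult_trigpoly_eq_0:
  assumes F: "integrable circ_measure F"
    and coeffs: "\<And>n. integral\<^sup>L circ_measure (\<lambda>z. F z * z powi n) = 0"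
  shows "integral\<^sup>L circ_measure (\<lambda>z. F z * trigpoly L z) = 0"
proof (induction L)
  case (Cons a L)
  obtain n c where a: "a = (n, c)" by (cases a)
  have "(\<lambda>z. F z * trigpoly (a # L) z) = (\<lambda>z. c * (F z * z powi n) + F z * trigpoly L z)"
    by (auto simp: a algebra_simps)
  moreover have "integrable circ_measure (\<lambda>z. F z * z powi n)"
    using AE_circ_norm_power_int[of n] by (intro integrable_mult_bounded[OF F, of _ 1]) auto
  moreover have "integrable circ_measure (\<lambda>z. F z * trigpoly L z)"
    by (rule integrable_mult_bounded[OF F _ AE_circ_norm_trigpoly_le]) simp
  ultimately show ?case using Cons coeffs[of n] by (simp add: Bochner_Integration.integral_add)
qed simp

lemma integral_mult_continuous_eq_0:
  assumes F: "integrable circ_measure F"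
    and coeffs: "\<And>n. integral\<^sup>L circ_measure (\<lambda>z. F z * z powi n) = 0"
    and \<phi>: "continuous_on UNIV \<phi>" "\<forall>z. cmod (\<phi> z) \<le> B"
  shows "integral\<^sup>L circ_measure (\<lambda>z. F z * \<phi> z) = 0"
proof -
  have bound: "cmod (integral\<^sup>L circ_measure (\<lambda>z. F z * \<phi> z)) \<le> e * integral\<^sup>L circ_measure (\<lambda>z. cmod (F z))"
    if e: "e > 0" for e
  proof -
    obtain L where L: "\<forall>z. cmod z = 1 \<longrightarrow> cmod (\<phi> z - trigpoly L z) < e"
      using trigpoly_uniform_approximation[OF continuous_on_subset[OF \<phi>(1)] e] by blast
    have "integral\<^sup>L circ_measure (\<lambda>z. F z * \<phi> z) =
          integral\<^sup>L circ_measure (\<lambda>z. F z * \<phi> z - F z * trigpoly L z)"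
      using integral_mult_trigpoly_eq_0[OF F coeffs, of L]
        integrable_mult_bounded[OF F _ AE_circ_norm_trigpoly_le, of L]
        integrable_mult_bounded[OF F borel_measurable_continuous_onI[OF \<phi>(1)], of B] \<phi>(2)
      by (simp add: Bochner_Integration.integral_diff)
    also have "cmod \<dots> \<le> integral\<^sup>L circ_measure (\<lambda>z. cmod (F z * \<phi> z - F z * trigpoly L z))"
      by (rule integral_norm_bound)
    also have "\<dots> \<le> integral\<^sup>L circ_measure (\<lambda>z. e * cmod (F z))"
    proof (rule integral_mono_AE)
      show "integrable circ_measure (\<lambda>z. cmod (F z * \<phi> z - F z * trigpoly L z))"
        using integrable_mult_bounded[OF F _ AE_circ_norm_trigpoly_le, of L]
          integrable_mult_bounded[OF F borel_measurable_continuous_onI[OF \<phi>(1)], of B] \<phi>(2)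
        by auto
      show "AE z in circ_measure. cmod (F z * \<phi> z - F z * trigpoly L z) \<le> e * cmod (F z)"
        using AE_circ_norm_eq_1
      proof eventually_elim
        case (elim z)
        have "cmod (F z) * cmod (\<phi> z - trigpoly L z) \<le> cmod (F z) * e"
          using L elim by (intro mult_left_mono) auto
        then show ?case by (simp add: norm_mult mult.commute right_diff_distrib[symmetric])
      qed
    qed (use F in auto)
    finally show ?thesis by simp
  qed
  have "cmod (integral\<^sup>L circ_measure (\<lambda>z. F z * \<phi> z)) \<le> 0"
  proof (rule field_le_epsilon)
    fix e :: real assume "e > 0"
    define I where "I = integral\<^sup>L circ_measure (\<lambda>z. cmod (F z))"
    have "I \<ge> 0" unfolding I_def by simp
    then have "e / (I + 1) * I \<le> e" using \<open>e > 0\<close> by (simp add: field_simps)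
    then show "cmod (integral\<^sup>L circ_measure (\<lambda>z. F z * \<phi> z)) \<le> 0 + e"
      using bound[of "e / (I + 1)"] \<open>e > 0\<close> \<open>I \<ge> 0\<close> unfolding I_def by simp
  qed
  then show ?thesis by simp
qed



lemma integral_norm_le_if_orthogonal:
  assumes F: "integrable circ_measure F"
    and b: "b \<in> borel_measurable borel" "\<And>z. cmod (b z) \<le> 1" "\<And>z. F z * b z = cmod (F z)"
    and \<phi>: "\<phi> \<in> borel_measurable borel" "\<And>z. cmod (\<phi> z) \<le> B"
    and orth: "integral\<^sup>L circ_measure (\<lambda>z. F z * \<phi> z) = 0"
  shows "integral\<^sup>L circ_measure (\<lambda>z. cmod (F z)) \<le> integral\<^sup>L circ_measure (\<lambda>z. cmod (F z) * cmod (b z - \<phi> z))"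
proof -
  have ib: "integrable circ_measure (\<lambda>z. F z * b z)"
    by (rule integrable_mult_bounded[OF F b(1), of 1]) (use b(2) in auto)
  have i\<phi>: "integrable circ_measure (\<lambda>z. F z * \<phi> z)"
    by (rule integrable_mult_bounded[OF F \<phi>(1), of B]) (use \<phi>(2) in auto)
  have "complex_of_real (integral\<^sup>L circ_measure (\<lambda>z. cmod (F z))) =
        integral\<^sup>L circ_measure (\<lambda>z. F z * b z) - integral\<^sup>L circ_measure (\<lambda>z. F z * \<phi> z)"
    using orth by (simp add: b(3))
  also have "\<dots> = integral\<^sup>L circ_measure (\<lambda>z. F z * (b z - \<phi> z))"
    unfolding right_diff_distrib using ib i\<phi> by (rule Bochner_Integration.integral_diff[symmetric])
  finally have eq: "complex_of_real (integral\<^sup>L circ_measure (\<lambda>z. cmod (F z))) =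
                    integral\<^sup>L circ_measure (\<lambda>z. F z * (b z - \<phi> z))" .
  have "integral\<^sup>L circ_measure (\<lambda>z. cmod (F z)) \<le>
        cmod (complex_of_real (integral\<^sup>L circ_measure (\<lambda>z. cmod (F z))))"
    by simp
  also have "\<dots> \<le> integral\<^sup>L circ_measure (\<lambda>z. cmod (F z * (b z - \<phi> z)))"
    unfolding eq by (rule integral_norm_bound)
  finally show ?thesis by (simp add: norm_mult)
qed

text \<open>An integrable \<open>F\<close> with vanishing Fourier coefficients is orthogonal to every continuous
  function; approximating \<open>cnj (sgn F)\<close> by continuous functions in \<open>L\<^sup>1(\<bar>F\<bar> m)\<close> then forces
  \<open>\<integral>\<bar>F\<bar> = 0\<close>.\<close>

lemma fourier_uniqueness:
  assumes F: "integrable circ_measure F"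
    and coeffs: "\<And>n. integral\<^sup>L circ_measure (\<lambda>z. F z * z powi n) = 0"
  shows "AE z in circ_measure. F z = 0"
proof -
  define N where "N = density circ_measure (\<lambda>z. ennreal (cmod (F z)))"
  have Fm: "F \<in> borel_measurable borel" using F by auto
  have sN: "sets N = sets borel" unfolding N_def by simp
  have "emeasure N (space N) = (\<integral>\<^sup>+ z. ennreal (cmod (F z)) \<partial>circ_measure)"
    unfolding N_def using Fm by (subst emeasure_density) auto
  also have "\<dots> < \<infinity>" using F unfolding integrable_iff_bounded by simp
  finally have N: "finite_measure N" by (rule finite_measureI[OF less_imp_neq])
  define b where "b z = cnj (sgn (F z))" for z
  have bm: "b \<in> borel_measurable borel" unfolding b_def using Fm by measurable
  have b_bound: "cmod (b z) \<le> 1" for z unfolding b_def by (simp add: norm_sgn)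
  have Fb: "F z * b z = complex_of_real (cmod (F z))" for z
  proof (cases "F z = 0")
    case False
    then show ?thesis unfolding b_def
      using complex_norm_square[of "F z"]
      by (simp add: sgn_div_norm scaleR_conv_of_real power2_eq_square field_simps)
  qed (simp add: b_def)
  have "integrable circ_measure (\<lambda>z. complex_of_real (cmod (F z)) * b z)"
    using b_bound by (intro integrable_mult_bounded[OF _ bm, of _ 1]) (use F in auto)
  then have "integrable N b"
    unfolding N_def using Fm bm by (subst integrable_density) (auto simp: scaleR_conv_of_real)
  then have b_approx: "continuous_L1_approximable N b"
    by (rule integrable_continuous_L1_approximable[OF N sN])
  have small: "integral\<^sup>L circ_measure (\<lambda>z. cmod (F z)) \<le> e" if e: "e > 0" for e
  proof -
    obtain \<phi> B where \<phi>: "continuous_on UNIV \<phi>" "\<forall>z. cmod (\<phi> z) \<le> B"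
        "integral\<^sup>L N (\<lambda>z. cmod (b z - \<phi> z)) < e"
      using b_approx e unfolding continuous_L1_approximable_def by blast
    have \<phi>m: "\<phi> \<in> borel_measurable borel" by (rule borel_measurable_continuous_onI[OF \<phi>(1)])
    have "integral\<^sup>L circ_measure (\<lambda>z. cmod (F z)) \<le> integral\<^sup>L circ_measure (\<lambda>z. cmod (F z) * cmod (b z - \<phi> z))"
      using \<phi>(2) by (intro integral_norm_le_if_orthogonal[OF F bm b_bound Fb \<phi>m]
                             integral_mult_continuous_eq_0[OF F coeffs \<phi>(1)]) auto
    also have "\<dots> = integral\<^sup>L N (\<lambda>z. cmod (b z - \<phi> z))"
      unfolding N_def by (subst integral_density) (use bm \<phi>m Fm in auto)
    finally show ?thesis using \<phi>(3) by simp
  qed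
  have "integral\<^sup>L circ_measure (\<lambda>z. cmod (F z)) \<le> 0"
    by (rule field_le_epsilon) (use small in simp)
  moreover have "integral\<^sup>L circ_measure (\<lambda>z. cmod (F z)) \<ge> 0" by simp
  ultimately have "integral\<^sup>L circ_measure (\<lambda>z. cmod (F z)) = 0" by simp
  then show ?thesis
    using integral_nonneg_eq_0_iff_AE[OF integrable_norm[OF F]] by simp
qed


section \<open>Density of trigonometric polynomials in \<open>L\<^sup>2\<close>\<close>

lemma L2_truncation_approximation:
  assumes h: "h \<in> L2" and e: "e > 0"
  shows "\<exists>M::nat. integral\<^sup>L circ_measure
                    (\<lambda>z. (cmod (h z - (if cmod (h z) \<le> M then h z else 0)))\<^sup>2) < e"
proof -
  define hM where "hM M z = (if cmod (h z) \<le> real M then h z else 0)" for M :: nat and z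
  have "(\<lambda>M. integral\<^sup>L circ_measure (\<lambda>z. (cmod (h z - hM M z))\<^sup>2)) \<longlonglongrightarrow> integral\<^sup>L circ_measure (\<lambda>z. 0::real)"
  proof (rule integral_dominated_convergence[where w="\<lambda>z. (cmod (h z))\<^sup>2"])
    show "(\<lambda>z. (cmod (h z - hM M z))\<^sup>2) \<in> borel_measurable circ_measure" for M
      using L2_measurable[OF h] unfolding hM_def by measurable
    show "AE z in circ_measure. (\<lambda>M. (cmod (h z - hM M z))\<^sup>2) \<longlonglongrightarrow> 0"
    proof (rule AE_I2)
      fix z
      have "eventually (\<lambda>M. (cmod (h z - hM M z))\<^sup>2 = 0) sequentially"
        unfolding eventually_sequentially
      proof (intro exI allI impI)
        fix M assume "nat \<lceil>cmod (h z)\<rceil> \<le> M"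
        then have "cmod (h z) \<le> real M" by linarith
        then show "(cmod (h z - hM M z))\<^sup>2 = 0" unfolding hM_def by simp
      qed
      then show "(\<lambda>M. (cmod (h z - hM M z))\<^sup>2) \<longlonglongrightarrow> 0" by (rule tendsto_eventually)
    qed
    show "AE z in circ_measure. norm ((cmod (h z - hM M z))\<^sup>2) \<le> (cmod (h z))\<^sup>2" for M
      by (rule AE_I2) (simp add: hM_def)
  qed (use L2_square_integrable[OF h] in simp_all)
  then have "(\<lambda>M. integral\<^sup>L circ_measure (\<lambda>z. (cmod (h z - hM M z))\<^sup>2)) \<longlonglongrightarrow> 0" by simp
  then obtain M where "integral\<^sup>L circ_measure (\<lambda>z. (cmod (h z - hM M z))\<^sup>2) < e"
    using e by (metis (no_types, lifting) LIMSEQ_D diff_zero le_refl real_norm_def abs_less_iff)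
  then show ?thesis unfolding hM_def by blast
qed

text \<open>Projecting a continuous \<open>L\<^sup>1\<close>-approximant onto the disc containing the range of \<open>h\<close>
  keeps it continuous and, the projection being a contraction fixing \<open>h\<close>, does not move it away
  from \<open>h\<close>.\<close>

lemma bounded_continuous_L1_approximation:
  assumes hm: "h \<in> borel_measurable borel" and hb: "\<And>z. cmod (h z) \<le> M" and e: "e > 0"
  shows "\<exists>\<psi>. continuous_on UNIV \<psi> \<and> (\<forall>z. cmod (\<psi> z) \<le> M) \<and>
             integrable circ_measure (\<lambda>z. cmod (h z - \<psi> z)) \<and>
             integral\<^sup>L circ_measure (\<lambda>z. cmod (h z - \<psi> z)) < e"
proof -
  have M: "M \<ge> 0" using hb[of 0] norm_ge_zero order_trans by blast
  have h_int: "integrable circ_measure h"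
    by (rule integrable_L2[OF L2_bounded[OF hm, of M]]) (use hb in simp)
  obtain \<phi> B where \<phi>: "continuous_on UNIV \<phi>" "\<forall>z. cmod (\<phi> z) \<le> B"
      "integral\<^sup>L circ_measure (\<lambda>z. cmod (h z - \<phi> z)) < e"
    using integrable_continuous_L1_approximable[OF circ.finite_measure_axioms sets_circ_measure h_int] e
    unfolding continuous_L1_approximable_def by blast
  define S where "S = cball (0::complex) M"
  have S: "convex S" "closed S" "S \<noteq> {}" unfolding S_def using M by auto
  define \<psi> where "\<psi> z = closest_point S (\<phi> z)" for z
  have \<psi>_cont: "continuous_on UNIV \<psi>" unfolding \<psi>_def
    by (rule continuous_on_compose2[OF continuous_on_closest_point[OF S] \<phi>(1)]) auto
  have \<psi>_bound: "\<forall>z. cmod (\<psi> z) \<le> M"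
    using closest_point_in_set[OF S(2,3)] unfolding \<psi>_def S_def by auto
  have \<psi>_close: "cmod (h z - \<psi> z) \<le> cmod (h z - \<phi> z)" for z
  proof -
    have "h z = closest_point S (h z)"
      using hb[of z] unfolding S_def by (simp add: closest_point_self)
    then have "dist (h z) (\<psi> z) = dist (closest_point S (h z)) (closest_point S (\<phi> z))"
      unfolding \<psi>_def by simp
    also have "\<dots> \<le> dist (h z) (\<phi> z)" by (rule closest_point_lipschitz[OF S])
    finally show ?thesis by (simp add: dist_norm)
  qed
  have \<psi>_int: "integrable circ_measure (\<lambda>z. cmod (h z - \<psi> z))"
    by (rule integrable_norm_diff_bounded_continuous[OF circ.finite_measure_axioms sets_circ_measure
          h_int \<psi>_cont \<psi>_bound])
  have "integral\<^sup>L circ_measure (\<lambda>z. cmod (h z - \<psi> z)) \<le> integral\<^sup>L circ_measure (\<lambda>z. cmod (h z - \<phi> z))"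
    by (rule integral_mono[OF \<psi>_int integrable_norm_diff_bounded_continuous[OF circ.finite_measure_axioms
          sets_circ_measure h_int \<phi>(1,2)] \<psi>_close])
  then show ?thesis using \<psi>_cont \<psi>_bound \<psi>_int \<phi>(3) by (intro exI[of _ \<psi>]) auto
qed

text \<open>For functions bounded by \<open>M\<close>, the \<open>L\<^sup>2\<close> distance is controlled by \<open>2M + 1\<close> times the
  \<open>L\<^sup>1\<close> distance, so \<open>L\<^sup>1\<close> approximation suffices.\<close>

lemma bounded_trigpoly_approximation_L2:
  assumes hm: "h \<in> borel_measurable borel" and hb: "\<And>z. cmod (h z) \<le> M" and e: "e > 0"
  shows "\<exists>L. integral\<^sup>L circ_measure (\<lambda>z. (cmod (h z - trigpoly L z))\<^sup>2) < e"
proof -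
  have M: "M \<ge> 0" using hb[of 0] norm_ge_zero order_trans by blast
  define C where "C = 2 * M + 1"
  have C: "C \<ge> 1" unfolding C_def using M by simp
  define \<eta> where "\<eta> = e / (4 * C)"
  have \<eta>: "\<eta> > 0" unfolding \<eta>_def using e C by simp
  have hL2: "h \<in> L2" by (rule L2_bounded[OF hm, of M]) (use hb in simp)
  obtain \<psi> where \<psi>: "continuous_on UNIV \<psi>" "\<forall>z. cmod (\<psi> z) \<le> M"
      "integrable circ_measure (\<lambda>z. cmod (h z - \<psi> z))"
      "integral\<^sup>L circ_measure (\<lambda>z. cmod (h z - \<psi> z)) < \<eta>"
    using bounded_continuous_L1_approximation[OF hm hb \<eta>] by blast
  have "min 1 \<eta> > 0" using \<eta> by simp
  then obtain L where L: "\<forall>z. cmod z = 1 \<longrightarrow> cmod (\<psi> z - trigpoly L z) < min 1 \<eta>"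
    using trigpoly_uniform_approximation[OF continuous_on_subset[OF \<psi>(1) subset_UNIV]] by blast
  have "integral\<^sup>L circ_measure (\<lambda>z. (cmod (h z - trigpoly L z))\<^sup>2) \<le>
        integral\<^sup>L circ_measure (\<lambda>z. C * (cmod (h z - \<psi> z) + \<eta>))"
  proof (rule integral_mono_AE)
    show "integrable circ_measure (\<lambda>z. (cmod (h z - trigpoly L z))\<^sup>2)"
      by (rule L2_square_integrable[OF L2_diff[OF hL2 L2_trigpoly]])
    show "integrable circ_measure (\<lambda>z. C * (cmod (h z - \<psi> z) + \<eta>))" using \<psi>(3) by simp
    show "AE z in circ_measure. (cmod (h z - trigpoly L z))\<^sup>2 \<le> C * (cmod (h z - \<psi> z) + \<eta>)"
      using AE_circ_norm_eq_1
    proof eventually_elim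
      case (elim z)
      have d: "cmod (\<psi> z - trigpoly L z) < min 1 \<eta>" using L elim by blast
      have t: "cmod (h z - trigpoly L z) \<le> cmod (h z - \<psi> z) + cmod (\<psi> z - trigpoly L z)"
        by (rule norm_diff_triangle_le[where y="\<psi> z"]) simp_all
      have a: "cmod (h z - trigpoly L z) \<le> cmod (h z - \<psi> z) + \<eta>" using t d by linarith
      have "cmod (h z - \<psi> z) \<le> cmod (h z) + cmod (\<psi> z)" by (rule norm_triangle_ineq4)
      then have b: "cmod (h z - trigpoly L z) \<le> C"
        using t d hb[of z] \<psi>(2) unfolding C_def by (smt (verit))
      have "(cmod (h z - trigpoly L z))\<^sup>2 = cmod (h z - trigpoly L z) * cmod (h z - trigpoly L z)"
        by (simp add: power2_eq_square)
      also have "\<dots> \<le> C * (cmod (h z - \<psi> z) + \<eta>)"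
        using a b C by (intro mult_mono) auto
      finally show ?case .
    qed
  qed
  also have "\<dots> = C * (integral\<^sup>L circ_measure (\<lambda>z. cmod (h z - \<psi> z)) + \<eta>)"
    using \<psi>(3) by (simp add: Bochner_Integration.integral_add)
  also have "\<dots> \<le> C * (2 * \<eta>)" using \<psi>(4) C by (intro mult_left_mono) auto
  also have "\<dots> < e" unfolding \<eta>_def using C e by (simp add: field_simps)
  finally show ?thesis by blast
qed

lemma trigpoly_dense_L2:
  assumes h: "h \<in> L2" and e: "e > 0"
  shows "\<exists>L. integral\<^sup>L circ_measure (\<lambda>z. (cmod (h z - trigpoly L z))\<^sup>2) < e"
proof -
  obtain M :: nat where M: "integral\<^sup>L circ_measure
      (\<lambda>z. (cmod (h z - (if cmod (h z) \<le> M then h z else 0)))\<^sup>2) < e / 4"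
    using L2_truncation_approximation[OF h, of "e/4"] e by auto
  define hM where "hM z = (if cmod (h z) \<le> M then h z else 0)" for z
  have hM_m: "hM \<in> borel_measurable borel" unfolding hM_def using L2_measurable[OF h] by measurable
  have hM_L2: "hM \<in> L2" by (rule L2_bounded[OF hM_m, of M]) (auto simp: hM_def)
  have "cmod (hM z) \<le> M" for z by (simp add: hM_def)
  then obtain L where L: "integral\<^sup>L circ_measure (\<lambda>z. (cmod (hM z - trigpoly L z))\<^sup>2) < e / 4"
    using bounded_trigpoly_approximation_L2[OF hM_m, of M "e/4"] e by auto
  have "integral\<^sup>L circ_measure (\<lambda>z. (cmod (h z - trigpoly L z))\<^sup>2) \<le>
      integral\<^sup>L circ_measure (\<lambda>z. 2 * (cmod (h z - hM z))\<^sup>2 + 2 * (cmod (hM z - trigpoly L z))\<^sup>2)"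
  proof (rule integral_mono)
    show "integrable circ_measure (\<lambda>z. (cmod (h z - trigpoly L z))\<^sup>2)"
      by (rule L2_square_integrable[OF L2_diff[OF h L2_trigpoly]])
    show "integrable circ_measure (\<lambda>z. 2 * (cmod (h z - hM z))\<^sup>2 + 2 * (cmod (hM z - trigpoly L z))\<^sup>2)"
      using L2_square_integrable[OF L2_diff[OF h hM_L2]]
        L2_square_integrable[OF L2_diff[OF hM_L2 L2_trigpoly]] by simp
    show "(cmod (h z - trigpoly L z))\<^sup>2 \<le> 2 * (cmod (h z - hM z))\<^sup>2 + 2 * (cmod (hM z - trigpoly L z))\<^sup>2"
      for z using norm_sq_add_le[of "h z - hM z" "hM z - trigpoly L z"] by simp
  qed
  also have "\<dots> = 2 * integral\<^sup>L circ_measure (\<lambda>z. (cmod (h z - hM z))\<^sup>2) +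
      2 * integral\<^sup>L circ_measure (\<lambda>z. (cmod (hM z - trigpoly L z))\<^sup>2)"
    using L2_square_integrable[OF L2_diff[OF h hM_L2]]
      L2_square_integrable[OF L2_diff[OF hM_L2 L2_trigpoly]]
    by (simp add: Bochner_Integration.integral_add)
  also have "\<dots> < e" using M L unfolding hM_def by linarith
  finally show ?thesis by blast
qed

lemma L2_orthogonal_if_disjoint_spectra:
  assumes f: "f \<in> L2" and h: "h \<in> L2"
    and f_spec: "\<And>m. m < 0 \<Longrightarrow> integral\<^sup>L circ_measure (\<lambda>z. f z * cnj (z powi m)) = 0"
    and h_spec: "\<And>n. n \<ge> 0 \<Longrightarrow> integral\<^sup>L circ_measure (\<lambda>z. h z * cnj (z powi n)) = 0"
  shows "integral\<^sup>L circ_measure (\<lambda>z. f z * cnj (h z)) = 0"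
proof (rule L2_inner_eq_0_if_small_representatives[OF f])
  fix \<delta> :: real assume \<delta>: "\<delta> > 0"
  obtain L where L: "integral\<^sup>L circ_measure (\<lambda>z. (cmod (h z - trigpoly L z))\<^sup>2) < \<delta>"
    using trigpoly_dense_L2[OF h \<delta>] by blast
  define Ln where "Ln = filter (\<lambda>x. fst x < 0) L"
  define Lp where "Lp = filter (\<lambda>x. \<not> fst x < 0) L"
  define x where "x z = h z - trigpoly Ln z" for z
  have xL: "x \<in> L2" unfolding x_def by (rule L2_diff[OF h L2_trigpoly])
  have "integral\<^sup>L circ_measure (\<lambda>z. x z * cnj (trigpoly Lp z)) =
        integral\<^sup>L circ_measure (\<lambda>z. h z * cnj (trigpoly Lp z))
        - integral\<^sup>L circ_measure (\<lambda>z. trigpoly Ln z * cnj (trigpoly Lp z))"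
    unfolding x_def left_diff_distrib
    by (intro Bochner_Integration.integral_diff integrable_L2_mult_cnj h L2_trigpoly)
  also have "\<dots> = 0"
    using integral_mult_cnj_trigpoly_eq_0[OF h, of Lp] h_spec
      integral_trigpoly_mult_cnj_trigpoly_eq_0[of Ln Lp]
    by (force simp: Ln_def Lp_def)
  finally have pyth: "integral\<^sup>L circ_measure (\<lambda>z. (cmod (x z - trigpoly Lp z))\<^sup>2) =
      integral\<^sup>L circ_measure (\<lambda>z. (cmod (x z))\<^sup>2) + integral\<^sup>L circ_measure (\<lambda>z. (cmod (trigpoly Lp z))\<^sup>2)"
    by (rule L2_pythagoras[OF xL L2_trigpoly])
  have "x z - trigpoly Lp z = h z - trigpoly L z" for z
    unfolding x_def Ln_def Lp_def diff_diff_eq by (simp only: trigpoly_filter)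
  then have "integral\<^sup>L circ_measure (\<lambda>z. (cmod (x z))\<^sup>2) +
             integral\<^sup>L circ_measure (\<lambda>z. (cmod (trigpoly Lp z))\<^sup>2) < \<delta>"
    using pyth L by simp
  moreover have "integral\<^sup>L circ_measure (\<lambda>z. (cmod (trigpoly Lp z))\<^sup>2) \<ge> 0" by simp
  ultimately have "integral\<^sup>L circ_measure (\<lambda>z. (cmod (x z))\<^sup>2) < \<delta>" by linarith
  moreover have "integral\<^sup>L circ_measure (\<lambda>z. f z * cnj (x z)) = integral\<^sup>L circ_measure (\<lambda>z. f z * cnj (h z))"
  proof -
    have "integral\<^sup>L circ_measure (\<lambda>z. f z * cnj (trigpoly Ln z)) = 0"
      using f_spec by (intro integral_mult_cnj_trigpoly_eq_0[OF f]) (auto simp: Ln_def)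
    then show ?thesis
      unfolding x_def complex_cnj_diff right_diff_distrib
      by (simp add: Bochner_Integration.integral_diff integrable_L2_mult_cnj f h L2_trigpoly)
  qed
  ultimately show "\<exists>x\<in>L2. integral\<^sup>L circ_measure (\<lambda>z. f z * cnj (x z)) = integral\<^sup>L circ_measure (\<lambda>z. f z * cnj (h z))
                     \<and> integral\<^sup>L circ_measure (\<lambda>z. (cmod (x z))\<^sup>2) < \<delta>"
    using xL by blast
qed



section \<open>The Hardy space and inner functions\<close>

lemma hardy2_L2: "f \<in> hardy2 \<Longrightarrow> f \<in> L2"
  unfolding hardy2_def by simp

lemma hardy2_coeff: "f \<in> hardy2 \<Longrightarrow> k > 0 \<Longrightarrow> integral\<^sup>L circ_measure (\<lambda>z. f z * z ^ k) = 0"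
  unfolding hardy2_def by simp

lemma hardy2I:
  "f \<in> L2 \<Longrightarrow> (\<And>k. k > 0 \<Longrightarrow> integral\<^sup>L circ_measure (\<lambda>z. f z * z ^ k) = 0) \<Longrightarrow> f \<in> hardy2"
  unfolding hardy2_def by auto

lemma hardy2_ae_eq:
  assumes f: "f \<in> hardy2" and g: "g \<in> borel_measurable borel" and fg: "ae_eq f g"
  shows "g \<in> hardy2"
proof (rule hardy2I)
  show "g \<in> L2" by (rule L2_ae_eq[OF hardy2_L2[OF f] g fg])
  fix k :: nat assume k: "k > 0"
  have "integral\<^sup>L circ_measure (\<lambda>z. g z * z ^ k) = integral\<^sup>L circ_measure (\<lambda>z. f z * z ^ k)"
    using fg g L2_measurable[OF hardy2_L2[OF f]] unfolding ae_eq_def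
    by (intro integral_cong_AE) (auto elim!: AE_mp)
  then show "integral\<^sup>L circ_measure (\<lambda>z. g z * z ^ k) = 0" using hardy2_coeff[OF f k] by simp
qed

lemma hardy2_add:
  assumes f: "f \<in> hardy2" and g: "g \<in> hardy2"
  shows "(\<lambda>z. f z + g z) \<in> hardy2"
proof (rule hardy2I)
  show "(\<lambda>z. f z + g z) \<in> L2" by (rule L2_add[OF hardy2_L2[OF f] hardy2_L2[OF g]])
  fix k :: nat assume k: "k > 0"
  show "integral\<^sup>L circ_measure (\<lambda>z. (f z + g z) * z ^ k) = 0"
    using integrable_L2_mult_power[OF hardy2_L2[OF f]] integrable_L2_mult_power[OF hardy2_L2[OF g]]
      hardy2_coeff[OF f k] hardy2_coeff[OF g k]
    by (simp add: distrib_right Bochner_Integration.integral_add)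
qed

lemma hardy2_cmult:
  assumes f: "f \<in> hardy2"
  shows "(\<lambda>z. c * f z) \<in> hardy2"
proof (rule hardy2I)
  show "(\<lambda>z. c * f z) \<in> L2" by (rule L2_cmult[OF hardy2_L2[OF f]])
  fix k :: nat assume k: "k > 0"
  show "integral\<^sup>L circ_measure (\<lambda>z. c * f z * z ^ k) = 0"
    using hardy2_coeff[OF f k] by (simp add: mult.assoc)
qed

lemma hardy2_diff: "f \<in> hardy2 \<Longrightarrow> g \<in> hardy2 \<Longrightarrow> (\<lambda>z. f z - g z) \<in> hardy2"
  using hardy2_add[of f "\<lambda>z. (-1) * g z"] hardy2_cmult[of g "-1"] by simp

lemma hardy2_const: "(\<lambda>z. c) \<in> hardy2"
  by (rule hardy2I) (simp_all add: integral_circ_power)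

lemma hardy2_mult_z: "f \<in> hardy2 \<Longrightarrow> (\<lambda>z. z * f z) \<in> hardy2"
proof (rule hardy2I)
  assume f: "f \<in> hardy2"
  show "(\<lambda>z. z * f z) \<in> L2"
    using AE_circ_norm_eq_1 by (intro L2_mult_bounded[OF _ _ hardy2_L2[OF f], of _ 1]) auto
  fix k :: nat assume "k > 0"
  show "integral\<^sup>L circ_measure (\<lambda>z. z * f z * z ^ k) = 0"
    using hardy2_coeff[OF f, of "Suc k"] by (simp add: algebra_simps)
qed

lemma hardy2_cnj_mult_z:
  assumes f: "f \<in> hardy2" and mean: "integral\<^sup>L circ_measure f = 0"
  shows "(\<lambda>z. cnj z * f z) \<in> hardy2"
proof (rule hardy2I)
  show "(\<lambda>z. cnj z * f z) \<in> L2"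
    using AE_circ_norm_eq_1 by (intro L2_mult_bounded[OF _ _ hardy2_L2[OF f], of _ 1]) auto
  fix k :: nat assume k: "k > 0"
  have "AE z in circ_measure. cnj z * f z * z ^ k = f z * z ^ (k - 1)"
    using AE_circ_cnj_eq_inverse
  proof eventually_elim
    case (elim z)
    have "z ^ k = z * z ^ (k - 1)" using k by (cases k) auto
    then show ?case using elim by (simp add: algebra_simps)
  qed
  then have "integral\<^sup>L circ_measure (\<lambda>z. cnj z * f z * z ^ k) =
             integral\<^sup>L circ_measure (\<lambda>z. f z * z ^ (k - 1))"
    using L2_measurable[OF hardy2_L2[OF f]] by (intro integral_cong_AE) auto
  also have "\<dots> = 0"
    using mean hardy2_coeff[OF f, of "k - 1"] k by (cases "k = 1") auto
  finally show "integral\<^sup>L circ_measure (\<lambda>z. cnj z * f z * z ^ k) = 0" .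
qed

text \<open>\<open>\<integral> a b z\<^sup>k\<close> pairs \<open>a\<close> with \<open>cnj (z\<^sup>k b)\<close>, whose spectrum is negative.\<close>

lemma hardy2_mult_coeff:
  assumes a: "a \<in> hardy2" and b: "b \<in> hardy2" and k: "k > 0"
  shows "integral\<^sup>L circ_measure (\<lambda>z. a z * b z * z ^ k) = 0"
proof -
  define h where "h z = cnj z ^ k * cnj (b z)" for z
  have hL: "h \<in> L2" unfolding h_def
    using AE_circ_norm_eq_1
    by (intro L2_mult_bounded[OF _ _ L2_cnj[OF hardy2_L2[OF b]], of _ 1]) (auto simp: norm_power)
  have "integral\<^sup>L circ_measure (\<lambda>z. a z * cnj (h z)) = 0"
  proof (rule L2_orthogonal_if_disjoint_spectra[OF hardy2_L2[OF a] hL])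
    fix m :: int assume m: "m < 0"
    have "AE z in circ_measure. a z * cnj (z powi m) = a z * z ^ nat (- m)"
      using AE_circ_cnj_power_int[of m] by eventually_elim (use m in \<open>simp add: power_int_def\<close>)
    then have "integral\<^sup>L circ_measure (\<lambda>z. a z * cnj (z powi m)) =
               integral\<^sup>L circ_measure (\<lambda>z. a z * z ^ nat (- m))"
      using L2_measurable[OF hardy2_L2[OF a]] by (intro integral_cong_AE) auto
    then show "integral\<^sup>L circ_measure (\<lambda>z. a z * cnj (z powi m)) = 0"
      using hardy2_coeff[OF a, of "nat (- m)"] m by simp
  next
    fix n :: int assume n: "n \<ge> 0"
    have "h z * cnj (z powi n) = cnj (b z * z ^ (k + nat n))" for z
      using n by (simp add: h_def power_int_def power_add)
    then have "integral\<^sup>L circ_measure (\<lambda>z. h z * cnj (z powi n)) =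
               integral\<^sup>L circ_measure (\<lambda>z. cnj (b z * z ^ (k + nat n)))"
      by presburger
    also have "\<dots> = cnj (integral\<^sup>L circ_measure (\<lambda>z. b z * z ^ (k + nat n)))"
      by (rule Bochner_Integration.integral_cnj)
    finally show "integral\<^sup>L circ_measure (\<lambda>z. h z * cnj (z powi n)) = 0"
      using hardy2_coeff[OF b, of "k + nat n"] k by simp
  qed
  moreover have "(\<lambda>z. a z * b z * z ^ k) = (\<lambda>z. a z * cnj (h z))" by (auto simp: h_def)
  ultimately show ?thesis by simp
qed

lemma integral_hardy2_mult:
  assumes a: "a \<in> hardy2" and b: "b \<in> hardy2"
  shows "integral\<^sup>L circ_measure (\<lambda>z. a z * b z) = integral\<^sup>L circ_measure a * integral\<^sup>L circ_measure b"
proof -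
  define a0 where "a0 = integral\<^sup>L circ_measure a"
  have "integral\<^sup>L circ_measure (\<lambda>z. a z - a0) = 0"
    using integrable_L2[OF hardy2_L2[OF a]] by (simp add: a0_def Bochner_Integration.integral_diff)
  then have a1: "(\<lambda>z. cnj z * (a z - a0)) \<in> hardy2"
    by (intro hardy2_cnj_mult_z hardy2_diff a hardy2_const)
  have "AE z in circ_measure. a z * b z = a0 * b z + cnj z * (a z - a0) * b z * z ^ 1"
    using AE_circ_cnj_eq_inverse
  proof eventually_elim
    case (elim z)
    then have "cnj z * z = 1" by auto
    then show ?case by (simp only: power_one_right) algebra
  qed
  then have "integral\<^sup>L circ_measure (\<lambda>z. a z * b z) =
             integral\<^sup>L circ_measure (\<lambda>z. a0 * b z + cnj z * (a z - a0) * b z * z ^ 1)"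
    using L2_measurable[OF hardy2_L2[OF a]] L2_measurable[OF hardy2_L2[OF b]]
    by (intro integral_cong_AE) auto
  also have "\<dots> = a0 * integral\<^sup>L circ_measure b
                 + integral\<^sup>L circ_measure (\<lambda>z. cnj z * (a z - a0) * b z * z ^ 1)"
    using integrable_L2[OF hardy2_L2[OF b]]
      integrable_L2_mult_power[OF hardy2_L2[OF hardy2_mult_z[OF b]], of 0]
      integrable_L2_mult[OF hardy2_L2[OF a1] hardy2_L2[OF hardy2_mult_z[OF b]]]
    by (subst Bochner_Integration.integral_add) (auto simp: algebra_simps)
  also have "\<dots> = a0 * integral\<^sup>L circ_measure b"
    using hardy2_mult_coeff[OF a1 b, of 1] by simp
  finally show ?thesis unfolding a0_def .
qed

lemma inner_fun_measurable: "inner_fun \<theta> \<Longrightarrow> \<theta> \<in> borel_measurable borel"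
  unfolding inner_fun_def by simp

lemma AE_inner_fun_norm_eq_1: "inner_fun \<theta> \<Longrightarrow> AE z in circ_measure. cmod (\<theta> z) = 1"
  unfolding inner_fun_def by auto

lemma AE_inner_fun_mult_cnj: "inner_fun \<theta> \<Longrightarrow> AE z in circ_measure. \<theta> z * cnj (\<theta> z) = 1"
  by (drule AE_inner_fun_norm_eq_1) (auto elim!: AE_mp simp: of_real_norm_sq[symmetric])

lemma inner_fun_hardy2:
  assumes "inner_fun \<theta>"
  shows "\<theta> \<in> hardy2"
proof -
  have "\<theta> \<in> L2"
    using AE_inner_fun_norm_eq_1[OF assms]
    by (intro L2_bounded[OF inner_fun_measurable[OF assms], of 1]) auto
  then show ?thesis using assms unfolding inner_fun_def hardy2_def by blast
qed

lemma hardy2_inner_fun_mult: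
  assumes th: "inner_fun \<theta>" and f: "f \<in> hardy2"
  shows "(\<lambda>z. \<theta> z * f z) \<in> hardy2"
proof (rule hardy2I)
  show "(\<lambda>z. \<theta> z * f z) \<in> L2"
    using AE_inner_fun_norm_eq_1[OF th]
    by (intro L2_mult_bounded[OF inner_fun_measurable[OF th] _ hardy2_L2[OF f], of 1]) auto
qed (rule hardy2_mult_coeff[OF inner_fun_hardy2[OF th] f])

lemma inner_fun_power_hardy2: "inner_fun \<theta> \<Longrightarrow> (\<lambda>z. \<theta> z ^ n) \<in> hardy2"
  by (induction n) (simp_all add: hardy2_const hardy2_inner_fun_mult)

lemma integral_inner_fun_power:
  assumes th: "inner_fun \<theta>" and th0: "value_at_0 \<theta> = 0"
  shows "integral\<^sup>L circ_measure (\<lambda>z. \<theta> z ^ Suc n) = 0"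
  using integral_hardy2_mult[OF inner_fun_hardy2[OF th] inner_fun_power_hardy2[OF th], of n] th0
  by (simp add: value_at_0_def)



section \<open>Model spaces and the Clark unitary\<close>

lemma model_space_hardy2: "f \<in> model_space \<theta> \<Longrightarrow> f \<in> hardy2"
  unfolding model_space_def by simp

lemma model_space_L2: "f \<in> model_space \<theta> \<Longrightarrow> f \<in> L2"
  by (rule hardy2_L2[OF model_space_hardy2])

lemma model_space_orthogonal: "f \<in> model_space \<theta> \<Longrightarrow> h \<in> hardy2 \<Longrightarrow> ip f (\<lambda>z. \<theta> z * h z) = 0"
  unfolding model_space_def by simp

lemma model_spaceI:
  "f \<in> hardy2 \<Longrightarrow> (\<And>h. h \<in> hardy2 \<Longrightarrow> ip f (\<lambda>z. \<theta> z * h z) = 0) \<Longrightarrow> f \<in> model_space \<theta>"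
  unfolding model_space_def by simp

lemma model_space_orthogonal_inner_fun:
  "f \<in> model_space \<theta> \<Longrightarrow> integral\<^sup>L circ_measure (\<lambda>z. f z * cnj (\<theta> z)) = 0"
  using model_space_orthogonal[of f \<theta> "\<lambda>z. 1"] hardy2_const[of 1] unfolding ip_def by simp

lemma model_space_ae_eq:
  assumes th: "inner_fun \<theta>" and f: "f \<in> model_space \<theta>"
    and g: "g \<in> borel_measurable borel" and fg: "ae_eq f g"
  shows "g \<in> model_space \<theta>"
proof (rule model_spaceI)
  show "g \<in> hardy2" by (rule hardy2_ae_eq[OF model_space_hardy2[OF f] g fg])
  fix h assume h: "h \<in> hardy2"
  have "ip g (\<lambda>z. \<theta> z * h z) = ip f (\<lambda>z. \<theta> z * h z)"
    unfolding ip_def using fg g model_space_L2[OF f] hardy2_L2[OF h] inner_fun_measurable[OF th]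
    unfolding ae_eq_def by (intro integral_cong_AE) (auto elim!: AE_mp)
  then show "ip g (\<lambda>z. \<theta> z * h z) = 0" using model_space_orthogonal[OF f h] by simp
qed

lemma model_space_lincomb:
  assumes th: "inner_fun \<theta>" and f: "f \<in> model_space \<theta>" and g: "g \<in> model_space \<theta>"
  shows "(\<lambda>z. a * f z + b * g z) \<in> model_space \<theta>"
proof (rule model_spaceI)
  show "(\<lambda>z. a * f z + b * g z) \<in> hardy2"
    by (intro hardy2_add hardy2_cmult model_space_hardy2[OF f] model_space_hardy2[OF g])
  fix h assume h: "h \<in> hardy2"
  have th_h: "(\<lambda>z. \<theta> z * h z) \<in> L2" by (rule hardy2_L2[OF hardy2_inner_fun_mult[OF th h]])
  have "ip (\<lambda>z. a * f z + b * g z) (\<lambda>z. \<theta> z * h z) =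
        a * ip f (\<lambda>z. \<theta> z * h z) + b * ip g (\<lambda>z. \<theta> z * h z)"
    unfolding ip_def
    using integrable_L2_mult_cnj[OF model_space_L2[OF f] th_h] integrable_L2_mult_cnj[OF model_space_L2[OF g] th_h]
    by (simp add: distrib_right mult.assoc Bochner_Integration.integral_add del: complex_cnj_mult)
  then show "ip (\<lambda>z. a * f z + b * g z) (\<lambda>z. \<theta> z * h z) = 0"
    using model_space_orthogonal[OF f h] model_space_orthogonal[OF g h] by simp
qed

lemma model_space_diff:
  "inner_fun \<theta> \<Longrightarrow> f \<in> model_space \<theta> \<Longrightarrow> g \<in> model_space \<theta> \<Longrightarrow> (\<lambda>z. f z - g z) \<in> model_space \<theta>"
  using model_space_lincomb[of \<theta> f g 1 "-1"] by simp

lemma model_space_add: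
  "inner_fun \<theta> \<Longrightarrow> f \<in> model_space \<theta> \<Longrightarrow> g \<in> model_space \<theta> \<Longrightarrow> (\<lambda>z. f z + g z) \<in> model_space \<theta>"
  using model_space_lincomb[of \<theta> f g 1 1] by simp

lemma model_space_const:
  assumes th: "inner_fun \<theta>" and th0: "value_at_0 \<theta> = 0"
  shows "(\<lambda>z. c) \<in> model_space \<theta>"
proof (rule model_spaceI[OF hardy2_const])
  fix h assume h: "h \<in> hardy2"
  have "ip (\<lambda>z. c) (\<lambda>z. \<theta> z * h z) = c * cnj (integral\<^sup>L circ_measure (\<lambda>z. \<theta> z * h z))"
    unfolding ip_def by (simp del: complex_cnj_mult)
  then show "ip (\<lambda>z. c) (\<lambda>z. \<theta> z * h z) = 0"
    using integral_hardy2_mult[OF inner_fun_hardy2[OF th] h] th0 by (simp add: value_at_0_def)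
qed

lemma cchi_mult_L2: "inner_fun \<theta> \<Longrightarrow> cchi_mult \<theta> \<in> L2"
  unfolding cchi_mult_def using AE_circ_norm_eq_1
  by (intro L2_mult_bounded[OF _ _ hardy2_L2[OF inner_fun_hardy2], of _ 1]) auto

text \<open>\<open>proj\<close> is a choice, so it is only determined up to null sets: any element of \<open>K\<close> with
  the orthogonality property agrees with it almost everywhere.\<close>

lemma proj_ae_eq:
  assumes K_L2: "K \<subseteq> L2" and K_diff: "\<And>a b. a \<in> K \<Longrightarrow> b \<in> K \<Longrightarrow> (\<lambda>z. a z - b z) \<in> K"
    and f: "f \<in> L2" and p: "p \<in> K" and p_orth: "\<forall>k\<in>K. ip (\<lambda>z. f z - p z) k = 0"
  shows "proj K f \<in> K \<and> ae_eq (proj K f) p"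
proof -
  define q where "q = proj K f"
  have "q \<in> K \<and> (\<forall>k\<in>K. ip (\<lambda>z. f z - q z) k = 0)"
    unfolding q_def proj_def by (rule someI[of _ p]) (use p p_orth in blast)
  then have q: "q \<in> K" and q_orth: "\<forall>k\<in>K. ip (\<lambda>z. f z - q z) k = 0" by auto
  define d where "d z = q z - p z" for z
  have dK: "d \<in> K" unfolding d_def by (rule K_diff[OF q p])
  have L2: "p \<in> L2" "q \<in> L2" "d \<in> L2" using K_L2 p q dK by auto
  have "integral\<^sup>L circ_measure (\<lambda>z. d z * cnj (d z)) =
        integral\<^sup>L circ_measure (\<lambda>z. (f z - p z) * cnj (d z) - (f z - q z) * cnj (d z))"
    unfolding d_def by (simp add: algebra_simps del: complex_cnj_diff)
  also have "\<dots> = ip (\<lambda>z. f z - p z) d - ip (\<lambda>z. f z - q z) d"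
    unfolding ip_def using L2 f
    by (intro Bochner_Integration.integral_diff integrable_L2_mult_cnj L2_diff)
  also have "\<dots> = 0" using p_orth q_orth dK by simp
  finally have "AE z in circ_measure. d z = 0"
    using L2_norm_sq_eq_0[of d] K_L2 dK by auto
  then show ?thesis using q unfolding q_def ae_eq_def d_def by simp
qed

text \<open>Every \<open>h \<in> H\<^sup>2\<close> splits as \<open>h(0) + z h\<^sub>1\<close> with \<open>h\<^sub>1 = cnj z (h - h(0)) \<in> H\<^sup>2\<close>; this is
  how \<open>S\<^sub>\<theta> f = z f - (f, cnj \<chi> \<theta>) \<theta>\<close> is seen to lie in \<open>K\<^sub>\<theta>\<close>.\<close>

lemma shift_model_space:
  assumes th: "inner_fun \<theta>" and f: "f \<in> model_space \<theta>"
  shows "(\<lambda>z. z * f z - ip f (cchi_mult \<theta>) * \<theta> z) \<in> model_space \<theta>"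
proof (rule model_spaceI)
  define c where "c = ip f (cchi_mult \<theta>)"
  have fL: "f \<in> L2" by (rule model_space_L2[OF f])
  show pH: "(\<lambda>z. z * f z - ip f (cchi_mult \<theta>) * \<theta> z) \<in> hardy2"
    by (intro hardy2_diff hardy2_mult_z hardy2_cmult model_space_hardy2[OF f] inner_fun_hardy2[OF th])
  fix h assume h: "h \<in> hardy2"
  define h0 where "h0 = integral\<^sup>L circ_measure h"
  define h1 where "h1 z = cnj z * (h z - h0)" for z
  have "integral\<^sup>L circ_measure (\<lambda>z. h z - h0) = 0"
    using integrable_L2[OF hardy2_L2[OF h]] by (simp add: h0_def Bochner_Integration.integral_diff)
  then have h1: "h1 \<in> hardy2"
    unfolding h1_def by (intro hardy2_cnj_mult_z hardy2_diff h hardy2_const)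
  have h1L: "h1 \<in> L2" by (rule hardy2_L2[OF h1])
  have AE: "AE z in circ_measure. (z * f z - c * \<theta> z) * cnj (\<theta> z * h z) =
      cnj h0 * (f z * cnj (cchi_mult \<theta> z)) + f z * cnj (\<theta> z * h1 z) - c * cnj h0 - c * cnj (h1 z * z ^ 1)"
    using AE_circ_cnj_eq_inverse AE_inner_fun_mult_cnj[OF th]
  proof eventually_elim
    case (elim z)
    then have e1: "z * cnj z = 1" and e2: "\<theta> z * cnj (\<theta> z) = 1" by auto
    show ?case unfolding h1_def cchi_mult_def
      by (simp only: complex_cnj_mult complex_cnj_diff complex_cnj_cnj power_one_right)
         (use e1 e2 in algebra)
  qed
  have i1: "integrable circ_measure (\<lambda>z. f z * cnj (cchi_mult \<theta> z))"
    by (rule integrable_L2_mult_cnj[OF fL cchi_mult_L2[OF th]])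
  have i2: "integrable circ_measure (\<lambda>z. f z * cnj (\<theta> z * h1 z))"
    by (rule integrable_L2_mult_cnj[OF fL hardy2_L2[OF hardy2_inner_fun_mult[OF th h1]]])
  have i3: "integrable circ_measure (\<lambda>z. cnj (h1 z * z ^ 1))"
    using integrable_L2_mult_power[OF h1L, of 1] by (rule integrable_cnj)
  have "ip (\<lambda>z. z * f z - c * \<theta> z) (\<lambda>z. \<theta> z * h z) = integral\<^sup>L circ_measure (\<lambda>z.
      cnj h0 * (f z * cnj (cchi_mult \<theta> z)) + f z * cnj (\<theta> z * h1 z) - c * cnj h0 - c * cnj (h1 z * z ^ 1))"
    unfolding ip_def using AE L2_measurable[OF hardy2_L2[OF pH]] hardy2_L2[OF h] fL h1L inner_fun_measurable[OF th]
    by (intro integral_cong_AE) (auto simp: cchi_mult_def c_def)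
  also have "\<dots> = cnj h0 * integral\<^sup>L circ_measure (\<lambda>z. f z * cnj (cchi_mult \<theta> z))
      + integral\<^sup>L circ_measure (\<lambda>z. f z * cnj (\<theta> z * h1 z)) - c * cnj h0
      - c * integral\<^sup>L circ_measure (\<lambda>z. cnj (h1 z * z ^ 1))"
    using i1 i2 i3
    by (simp add: Bochner_Integration.integral_add Bochner_Integration.integral_diff del: complex_cnj_mult)
  also have "integral\<^sup>L circ_measure (\<lambda>z. f z * cnj (cchi_mult \<theta> z)) = c"
    unfolding c_def ip_def ..
  also have "integral\<^sup>L circ_measure (\<lambda>z. f z * cnj (\<theta> z * h1 z)) = 0"
    using model_space_orthogonal[OF f h1] unfolding ip_def .
  also have "integral\<^sup>L circ_measure (\<lambda>z. cnj (h1 z * z ^ 1)) = 0"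
    using hardy2_coeff[OF h1, of 1] by (simp only: Bochner_Integration.integral_cnj) simp
  finally show "ip (\<lambda>z. z * f z - ip f (cchi_mult \<theta>) * \<theta> z) (\<lambda>z. \<theta> z * h z) = 0"
    unfolding c_def by simp
qed

lemma comp_shift_ae_eq:
  assumes th: "inner_fun \<theta>" and f: "f \<in> model_space \<theta>"
  shows "comp_shift \<theta> f \<in> model_space \<theta> \<and>
         ae_eq (comp_shift \<theta> f) (\<lambda>z. z * f z - ip f (cchi_mult \<theta>) * \<theta> z)"
  unfolding comp_shift_def
proof (rule proj_ae_eq)
  show "model_space \<theta> \<subseteq> L2" using model_space_L2 by blast
  show "(\<lambda>z. z * f z) \<in> L2" by (rule hardy2_L2[OF hardy2_mult_z[OF model_space_hardy2[OF f]]])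
  show "\<forall>k\<in>model_space \<theta>. ip (\<lambda>z. z * f z - (z * f z - ip f (cchi_mult \<theta>) * \<theta> z)) k = 0"
  proof
    fix k assume k: "k \<in> model_space \<theta>"
    define c where "c = ip f (cchi_mult \<theta>)"
    have "ip (\<lambda>z. z * f z - (z * f z - c * \<theta> z)) k = c * integral\<^sup>L circ_measure (\<lambda>z. \<theta> z * cnj (k z))"
      unfolding ip_def by (simp add: mult.assoc)
    also have "integral\<^sup>L circ_measure (\<lambda>z. \<theta> z * cnj (k z)) =
               cnj (integral\<^sup>L circ_measure (\<lambda>z. k z * cnj (\<theta> z)))"
      by (subst Bochner_Integration.integral_cnj[symmetric]) (simp add: mult.commute)
    finally show "ip (\<lambda>z. z * f z - (z * f z - ip f (cchi_mult \<theta>) * \<theta> z)) k = 0"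
      using model_space_orthogonal_inner_fun[OF k] unfolding c_def by simp
  qed
qed (use model_space_diff[OF th] shift_model_space[OF th f] in auto)

lemma clark_U_ae_eq:
  assumes th: "inner_fun \<theta>" and th0: "value_at_0 \<theta> = 0" and f: "f \<in> model_space \<theta>"
  shows "clark_U \<theta> 1 f \<in> model_space \<theta> \<and>
         ae_eq (clark_U \<theta> 1 f) (\<lambda>z. z * f z + ip f (cchi_mult \<theta>) * (1 - \<theta> z))"
proof -
  have U: "clark_U \<theta> 1 f = (\<lambda>z. comp_shift \<theta> f z + ip f (cchi_mult \<theta>))"
    unfolding clark_U_def by simp
  have "(\<lambda>z. comp_shift \<theta> f z + ip f (cchi_mult \<theta>)) \<in> model_space \<theta>"
    using model_space_add[OF th _ model_space_const[OF th th0], of "comp_shift \<theta> f"]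
      comp_shift_ae_eq[OF th f] by simp
  moreover have "ae_eq (\<lambda>z. comp_shift \<theta> f z + ip f (cchi_mult \<theta>))
                       (\<lambda>z. z * f z + ip f (cchi_mult \<theta>) * (1 - \<theta> z))"
    using comp_shift_ae_eq[OF th f] unfolding ae_eq_def by (auto elim!: AE_mp simp: algebra_simps)
  ultimately show ?thesis unfolding U by simp
qed



lemma cnj_z_mult_model_space:
  assumes th: "inner_fun \<theta>" and F: "F \<in> hardy2" and F0: "integral\<^sup>L circ_measure F = 0"
    and orth: "\<And>k. k \<in> hardy2 \<Longrightarrow> ip F (\<lambda>z. \<theta> z * (z * k z)) = 0"
  shows "(\<lambda>z. cnj z * F z) \<in> model_space \<theta>"
proof (rule model_spaceI[OF hardy2_cnj_mult_z[OF F F0]])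
  fix k assume k: "k \<in> hardy2"
  have "AE z in circ_measure. cnj z * F z * cnj (\<theta> z * k z) = F z * cnj (\<theta> z * (z * k z))"
    using AE_circ_cnj_eq_inverse by eventually_elim (simp add: field_simps)
  then have "ip (\<lambda>z. cnj z * F z) (\<lambda>z. \<theta> z * k z) = ip F (\<lambda>z. \<theta> z * (z * k z))"
    unfolding ip_def using inner_fun_measurable[OF th] L2_measurable[OF hardy2_L2[OF F]]
      L2_measurable[OF hardy2_L2[OF k]] by (intro integral_cong_AE) auto
  then show "ip (\<lambda>z. cnj z * F z) (\<lambda>z. \<theta> z * k z) = 0" using orth[OF k] by simp
qed

text \<open>The preimage of \<open>f\<close> under \<open>U\<^sub>(\<^sub>\<theta>\<^sub>)\<^sub>1\<close>: with \<open>a = f(0)\<close>, \<open>g = cnj z (f - a + a \<theta>)\<close>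
  has \<open>(g, cnj \<chi> \<theta>) = a\<close>, hence \<open>U g = z g + a (1 - \<theta>) = f\<close>.\<close>

definition clark_U_preimage :: "(complex \<Rightarrow> complex) \<Rightarrow> (complex \<Rightarrow> complex) \<Rightarrow> complex \<Rightarrow> complex" where
  "clark_U_preimage \<theta> f z =
     cnj z * (f z - integral\<^sup>L circ_measure f + integral\<^sup>L circ_measure f * \<theta> z)"

lemma clark_U_preimage_model_space:
  assumes th: "inner_fun \<theta>" and th0: "value_at_0 \<theta> = 0" and f: "f \<in> model_space \<theta>"
  shows "clark_U_preimage \<theta> f \<in> model_space \<theta>"
proof -
  have fL: "f \<in> L2" by (rule model_space_L2[OF f])
  have thH: "\<theta> \<in> hardy2" by (rule inner_fun_hardy2[OF th])
  have th_mean: "integral\<^sup>L circ_measure \<theta> = 0" using th0 unfolding value_at_0_def .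
  define a where "a = integral\<^sup>L circ_measure f"
  define F where "F z = f z - a + a * \<theta> z" for z
  have FH: "F \<in> hardy2"
    unfolding F_def by (intro hardy2_add hardy2_diff hardy2_cmult model_space_hardy2[OF f] thH hardy2_const)
  have "integral\<^sup>L circ_measure F = integral\<^sup>L circ_measure f - a + a * integral\<^sup>L circ_measure \<theta>"
    unfolding F_def using integrable_L2[OF fL] integrable_L2[OF hardy2_L2[OF thH]]
    by (simp add: Bochner_Integration.integral_add Bochner_Integration.integral_diff)
  then have F0: "integral\<^sup>L circ_measure F = 0" using th_mean unfolding a_def by simp
  have "(\<lambda>z. cnj z * F z) \<in> model_space \<theta>"
  proof (rule cnj_z_mult_model_space[OF th FH F0])
    fix k assume k: "k \<in> hardy2"
    have zk: "(\<lambda>z. z * k z) \<in> hardy2" by (rule hardy2_mult_z[OF k])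
    have th_zk: "(\<lambda>z. \<theta> z * (z * k z)) \<in> L2" by (rule hardy2_L2[OF hardy2_inner_fun_mult[OF th zk]])
    have "AE z in circ_measure. F z * cnj (\<theta> z * (z * k z)) =
        f z * cnj (\<theta> z * (z * k z)) - a * cnj (\<theta> z * (z * k z)) + a * cnj (k z * z ^ 1)"
      using AE_inner_fun_mult_cnj[OF th]
    proof eventually_elim
      case (elim z)
      show ?case unfolding F_def
        by (simp only: complex_cnj_mult complex_cnj_diff complex_cnj_add complex_cnj_cnj power_one_right)
           (use elim in algebra)
    qed
    then have "ip F (\<lambda>z. \<theta> z * (z * k z)) = integral\<^sup>L circ_measure (\<lambda>z.
        f z * cnj (\<theta> z * (z * k z)) - a * cnj (\<theta> z * (z * k z)) + a * cnj (k z * z ^ 1))"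
      unfolding ip_def using inner_fun_measurable[OF th] L2_measurable[OF hardy2_L2[OF FH]]
        L2_measurable[OF fL] L2_measurable[OF hardy2_L2[OF k]]
      by (intro integral_cong_AE) auto
    also have "\<dots> = ip f (\<lambda>z. \<theta> z * (z * k z))
        - a * cnj (integral\<^sup>L circ_measure (\<lambda>z. \<theta> z * (z * k z)))
        + a * cnj (integral\<^sup>L circ_measure (\<lambda>z. k z * z ^ 1))"
      unfolding ip_def
      using integrable_L2_mult_cnj[OF fL th_zk] integrable_cnj[OF integrable_L2[OF th_zk]]
        integrable_cnj[OF integrable_L2_mult_power[OF hardy2_L2[OF k], of 1]]
      by (simp add: Bochner_Integration.integral_add Bochner_Integration.integral_diff
               del: complex_cnj_mult)
    also have "\<dots> = 0"
      using model_space_orthogonal[OF f zk] integral_hardy2_mult[OF thH zk] th_mean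
        hardy2_coeff[OF k, of 1] by simp
    finally show "ip F (\<lambda>z. \<theta> z * (z * k z)) = 0" .
  qed
  then show ?thesis unfolding clark_U_preimage_def F_def a_def .
qed

lemma ip_clark_U_preimage:
  assumes th: "inner_fun \<theta>" and th0: "value_at_0 \<theta> = 0" and f: "f \<in> model_space \<theta>"
  shows "ip (clark_U_preimage \<theta> f) (cchi_mult \<theta>) = integral\<^sup>L circ_measure f"
proof -
  have fL: "f \<in> L2" by (rule model_space_L2[OF f])
  have thL: "\<theta> \<in> L2" by (rule hardy2_L2[OF inner_fun_hardy2[OF th]])
  define a where "a = integral\<^sup>L circ_measure f"
  have "AE z in circ_measure.
      clark_U_preimage \<theta> f z * cnj (cchi_mult \<theta> z) = f z * cnj (\<theta> z) - a * cnj (\<theta> z) + a"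
    using AE_inner_fun_mult_cnj[OF th] AE_circ_cnj_eq_inverse
  proof eventually_elim
    case (elim z)
    then have e1: "z * cnj z = 1" and e2: "\<theta> z * cnj (\<theta> z) = 1" by auto
    show ?case unfolding clark_U_preimage_def cchi_mult_def a_def[symmetric]
      by (simp only: complex_cnj_mult complex_cnj_diff complex_cnj_add complex_cnj_cnj)
         (use e1 e2 in algebra)
  qed
  then have "ip (clark_U_preimage \<theta> f) (cchi_mult \<theta>) =
             integral\<^sup>L circ_measure (\<lambda>z. f z * cnj (\<theta> z) - a * cnj (\<theta> z) + a)"
    unfolding ip_def using model_space_L2[OF clark_U_preimage_model_space[OF th th0 f]] fL
      inner_fun_measurable[OF th]
    by (intro integral_cong_AE) (auto simp: cchi_mult_def)
  also have "\<dots> = integral\<^sup>L circ_measure (\<lambda>z. f z * cnj (\<theta> z)) - a * cnj (integral\<^sup>L circ_measure \<theta>) + a"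
    using integrable_L2_mult_cnj[OF fL thL] integrable_cnj[OF integrable_L2[OF thL]]
    by (simp add: Bochner_Integration.integral_add Bochner_Integration.integral_diff)
  also have "\<dots> = a"
    using model_space_orthogonal_inner_fun[OF f] th0 by (simp add: value_at_0_def)
  finally show ?thesis unfolding a_def .
qed

lemma clark_U_surj:
  assumes th: "inner_fun \<theta>" and th0: "value_at_0 \<theta> = 0" and f: "f \<in> model_space \<theta>"
  shows "\<exists>g\<in>model_space \<theta>. ae_eq (clark_U \<theta> 1 g) f"
proof (intro bexI)
  let ?g = "clark_U_preimage \<theta> f"
  show gK: "?g \<in> model_space \<theta>" by (rule clark_U_preimage_model_space[OF th th0 f])
  have "ae_eq (\<lambda>z. z * ?g z + ip ?g (cchi_mult \<theta>) * (1 - \<theta> z)) f"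
    unfolding ae_eq_def ip_clark_U_preimage[OF th th0 f] using AE_circ_cnj_eq_inverse
  proof eventually_elim
    case (elim z)
    then have "z * cnj z = 1" by auto
    then show ?case unfolding clark_U_preimage_def by algebra
  qed
  then show "ae_eq (clark_U \<theta> 1 ?g) f"
    using clark_U_ae_eq[OF th th0 gK] ae_eq_trans by blast
qed

section \<open>Inner functions vanishing at the origin\<close>

lemma cesaro_powers_tendsto:
  fixes w :: complex
  assumes w: "cmod w = 1"
  shows "(\<lambda>N. (\<Sum>n<N. w ^ Suc n) / of_nat N) \<longlonglongrightarrow> (if w = 1 then 1 else 0)"
proof (cases "w = 1")
  case True
  have "eventually (\<lambda>N. (\<Sum>n<N. w ^ Suc n) / of_nat N = 1) sequentially"
    unfolding eventually_sequentially using True by (intro exI[of _ 1]) auto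
  then show ?thesis using True by (simp add: tendsto_eventually)
next
  case False
  define C where "C = 2 / cmod (w - 1)"
  have bound: "cmod (\<Sum>n<N. w ^ Suc n) \<le> C" for N
  proof -
    have "(\<Sum>n<N. w ^ Suc n) = w * ((w ^ N - 1) / (w - 1))"
      using geometric_sum[OF False, of N] by (simp add: sum_distrib_left[symmetric])
    then have "cmod (\<Sum>n<N. w ^ Suc n) = cmod (w ^ N - 1) / cmod (w - 1)"
      using w by (simp add: norm_mult norm_divide)
    also have "\<dots> \<le> C"
      unfolding C_def using norm_triangle_ineq4[of "w ^ N" 1] w
      by (intro divide_right_mono) (auto simp: norm_power)
    finally show ?thesis .
  qed
  have "(\<lambda>N. (\<Sum>n<N. w ^ Suc n) / of_nat N) \<longlonglongrightarrow> 0"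
  proof (rule Lim_null_comparison)
    show "eventually (\<lambda>N. norm ((\<Sum>n<N. w ^ Suc n) / of_nat N) \<le> C * inverse (real N)) sequentially"
    proof (intro always_eventually allI)
      fix N :: nat
      have "norm ((\<Sum>n<N. w ^ Suc n) / of_nat N) = cmod (\<Sum>n<N. w ^ Suc n) / real N"
        by (simp add: norm_divide)
      also have "\<dots> = cmod (\<Sum>n<N. w ^ Suc n) * inverse (real N)"
        by (simp add: divide_inverse)
      also have "\<dots> \<le> C * inverse (real N)" using bound[of N] by (intro mult_right_mono) auto
      finally show "norm ((\<Sum>n<N. w ^ Suc n) / of_nat N) \<le> C * inverse (real N)" .
    qed
    show "(\<lambda>N. C * inverse (real N)) \<longlonglongrightarrow> 0"
      using tendsto_mult_right_zero[OF lim_inverse_n, of C] by simp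
  qed
  then show ?thesis using False by simp
qed

text \<open>If \<open>\<theta>(0) = 0\<close> then all powers \<open>\<theta>\<^sup>n\<close>, \<open>n \<ge> 1\<close>, have mean zero, and so have their Cesaro
  means; these converge boundedly to the indicator of \<open>{\<theta> = 1}\<close>.\<close>

lemma AE_inner_fun_neq_1:
  assumes th: "inner_fun \<theta>" and th0: "value_at_0 \<theta> = 0"
  shows "AE z in circ_measure. \<theta> z \<noteq> 1"
proof -
  have th_m: "\<theta> \<in> borel_measurable borel" by (rule inner_fun_measurable[OF th])
  define E where "E = {z. \<theta> z = 1}"
  have E: "E \<in> sets borel" unfolding E_def using th_m by measurable
  define A where "A N z = (\<Sum>n<N. \<theta> z ^ Suc n) / of_nat N" for N z
  have A_m: "A N \<in> borel_measurable borel" for N unfolding A_def using th_m by measurable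
  have int_A: "integral\<^sup>L circ_measure (A N) = 0" for N
  proof -
    have "integral\<^sup>L circ_measure (\<lambda>z. \<Sum>n<N. \<theta> z ^ Suc n) =
          (\<Sum>n<N. integral\<^sup>L circ_measure (\<lambda>z. \<theta> z ^ Suc n))"
      by (rule Bochner_Integration.integral_sum)
         (rule integrable_L2[OF hardy2_L2[OF inner_fun_power_hardy2[OF th]]])
    then show ?thesis unfolding A_def using integral_inner_fun_power[OF th th0] by simp
  qed
  have "(\<lambda>N. integral\<^sup>L circ_measure (A N)) \<longlonglongrightarrow> integral\<^sup>L circ_measure (\<lambda>z. complex_of_real (indicator E z))"
  proof (rule integral_dominated_convergence[where w="\<lambda>z. 1"])
    show "AE z in circ_measure. (\<lambda>N. A N z) \<longlonglongrightarrow> complex_of_real (indicator E z)"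
      using AE_inner_fun_norm_eq_1[OF th]
    proof eventually_elim
      case (elim z)
      have "complex_of_real (indicator E z) = (if \<theta> z = 1 then 1 else 0)" by (simp add: E_def)
      then show ?case unfolding A_def by (simp only: cesaro_powers_tendsto[OF elim])
    qed
    show "AE z in circ_measure. norm (A N z) \<le> 1" for N
      using AE_inner_fun_norm_eq_1[OF th]
    proof eventually_elim
      case (elim z)
      have "cmod (\<Sum>n<N. \<theta> z ^ Suc n) \<le> (\<Sum>n<N. cmod (\<theta> z ^ Suc n))" by (rule norm_sum)
      also have "\<dots> = real N" using elim by (simp add: norm_power norm_mult)
      finally show ?case by (cases "N = 0") (simp_all add: A_def norm_divide divide_le_eq)
    qed
  qed (use A_m E in simp_all)
  then have "measure circ_measure E = 0"
    using int_A E by (simp add: LIMSEQ_const_iff)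
  then have "AE z in circ_measure. z \<notin> E"
    using E by (intro AE_not_in) (simp add: circ.emeasure_eq_measure null_sets_def)
  then show ?thesis unfolding E_def by simp
qed



section \<open>Intertwiners of Clark unitaries are multiplication operators\<close>

lemma AE_eq_0_if_divisible_by_z:
  assumes integrable: "\<And>f. f \<in> K \<Longrightarrow> integrable circ_measure (D f)"
    and analytic: "\<And>f k. f \<in> K \<Longrightarrow> k > 0 \<Longrightarrow> integral\<^sup>L circ_measure (\<lambda>z. D f z * z ^ k) = 0"
    and divisible: "\<And>f. f \<in> K \<Longrightarrow> \<exists>g\<in>K. ae_eq (D f) (\<lambda>z. z * D g z)"
    and f: "f \<in> K"
  shows "AE z in circ_measure. D f z = 0"
proof -
  have power_divisible: "\<exists>h\<in>K. ae_eq (D f) (\<lambda>z. z ^ n * D h z)" for n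
  proof (induction n)
    case 0
    show ?case using f by (intro bexI[of _ f]) (simp_all add: ae_eq_def)
  next
    case (Suc n)
    then obtain h where h: "h \<in> K" "ae_eq (D f) (\<lambda>z. z ^ n * D h z)" by blast
    obtain g where g: "g \<in> K" "ae_eq (D h) (\<lambda>z. z * D g z)" using divisible[OF h(1)] by blast
    have "ae_eq (D f) (\<lambda>z. z ^ Suc n * D g z)"
      using h(2) g(2) unfolding ae_eq_def by (auto elim!: AE_mp)
    then show ?case using g(1) by blast
  qed
  show ?thesis
  proof (rule fourier_uniqueness[OF integrable[OF f]])
    fix n :: int
    show "integral\<^sup>L circ_measure (\<lambda>z. D f z * z powi n) = 0"
    proof (cases "n > 0")
      case True
      then show ?thesis using analytic[OF f, of "nat n"] by (simp add: power_int_def)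
    next
      case False
      obtain h where h: "h \<in> K" "ae_eq (D f) (\<lambda>z. z ^ nat (1 - n) * D h z)"
        using power_divisible by blast
      have "AE z in circ_measure. D f z * z powi n = D h z * z ^ 1"
        using h(2) AE_circ_cnj_eq_inverse unfolding ae_eq_def
      proof eventually_elim
        case (elim z)
        have "z ^ nat (1 - n) * z powi n = z powi (1 - n) * z powi n"
          using False by (simp add: power_int_def)
        also have "\<dots> = z" using elim by (simp add: power_int_add[symmetric])
        finally show ?case using elim by (simp add: algebra_simps)
      qed
      then have "integral\<^sup>L circ_measure (\<lambda>z. D f z * z powi n) = integral\<^sup>L circ_measure (\<lambda>z. D h z * z ^ 1)"
        using integrable[OF f] integrable[OF h(1)] by (intro integral_cong_AE) auto
      then show ?thesis using analytic[OF h(1), of 1] by simp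
    qed
  qed
qed

text \<open>The defect \<open>(1 - \<theta>) X f - (u - \<omega>) f\<close> measures how far \<open>X\<close> is from multiplication by
  \<open>(u - \<omega>)/(1 - \<theta>)\<close>.\<close>

definition multiplier_defect ::
  "(complex \<Rightarrow> complex) \<Rightarrow> (complex \<Rightarrow> complex) \<Rightarrow> (complex \<Rightarrow> complex) \<Rightarrow>
   ((complex \<Rightarrow> complex) \<Rightarrow> (complex \<Rightarrow> complex)) \<Rightarrow> (complex \<Rightarrow> complex) \<Rightarrow> complex \<Rightarrow> complex" where
  "multiplier_defect \<theta> \<omega> u X f z = (1 - \<theta> z) * X f z - (u z - \<omega> z) * f z"

lemma integrable_multiplier_defect:
  assumes th: "inner_fun \<theta>" and om: "inner_fun \<omega>" and L2: "u \<in> L2" "X f \<in> L2" "f \<in> L2"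
  shows "integrable circ_measure (multiplier_defect \<theta> \<omega> u X f)"
proof -
  have "integrable circ_measure (\<lambda>z. X f z - \<theta> z * X f z - (u z * f z - \<omega> z * f z))"
    using integrable_L2[OF L2(2)] integrable_L2_mult[OF hardy2_L2[OF inner_fun_hardy2[OF th]] L2(2)]
      integrable_L2_mult[OF L2(1,3)] integrable_L2_mult[OF hardy2_L2[OF inner_fun_hardy2[OF om]] L2(3)]
    by (intro Bochner_Integration.integrable_diff)
  then show ?thesis unfolding multiplier_defect_def by (simp add: algebra_simps)
qed

lemma multiplier_defect_coeff:
  assumes th: "inner_fun \<theta>" and om: "inner_fun \<omega>"
    and H: "u \<in> hardy2" "X f \<in> hardy2" "f \<in> hardy2" and k: "k > 0"
  shows "integral\<^sup>L circ_measure (\<lambda>z. multiplier_defect \<theta> \<omega> u X f z * z ^ k) = 0"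
proof -
  have thH: "\<theta> \<in> hardy2" by (rule inner_fun_hardy2[OF th])
  have omH: "\<omega> \<in> hardy2" by (rule inner_fun_hardy2[OF om])
  have int: "integrable circ_measure (\<lambda>z. a z * b z * z ^ k)" if "a \<in> hardy2" "b \<in> hardy2" for a b
  proof (rule integrable_mult_bounded[OF integrable_L2_mult[OF hardy2_L2[OF that(1)] hardy2_L2[OF that(2)]]])
    show "AE z in circ_measure. cmod (z ^ k) \<le> 1" using AE_circ_norm_power[of k] by (auto elim: AE_mp)
  qed simp
  have "integral\<^sup>L circ_measure (\<lambda>z. multiplier_defect \<theta> \<omega> u X f z * z ^ k) =
      integral\<^sup>L circ_measure
        (\<lambda>z. X f z * z ^ k - \<theta> z * X f z * z ^ k - (u z * f z * z ^ k - \<omega> z * f z * z ^ k))"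
    by (rule arg_cong[where f="integral\<^sup>L circ_measure"]) (simp add: multiplier_defect_def algebra_simps)
  also have "\<dots> =
      integral\<^sup>L circ_measure (\<lambda>z. X f z * z ^ k) - integral\<^sup>L circ_measure (\<lambda>z. \<theta> z * X f z * z ^ k)
      - (integral\<^sup>L circ_measure (\<lambda>z. u z * f z * z ^ k) - integral\<^sup>L circ_measure (\<lambda>z. \<omega> z * f z * z ^ k))"
    using integrable_L2_mult_power[OF hardy2_L2[OF H(2)]] int[OF thH H(2)] int[OF H(1,3)] int[OF omH H(3)]
    by (simp add: Bochner_Integration.integral_diff)
  also have "\<dots> = 0"
    using hardy2_coeff[OF H(2) k] hardy2_mult_coeff[OF thH H(2) k] hardy2_mult_coeff[OF H(1,3) k]
      hardy2_mult_coeff[OF omH H(3) k] by simp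
  finally show ?thesis .
qed



lemma multiplier_defect_clark_U:
  assumes th: "inner_fun \<theta>" and om: "inner_fun \<omega>" and th0: "value_at_0 \<theta> = 0"
    and f: "f \<in> model_space \<theta>" and Xf: "X f \<in> model_space \<omega>"
    and coeff: "ip (X f) (cchi_mult \<omega>) = ip f (cchi_mult \<theta>)"
    and intertwines: "ae_eq (X (clark_U \<theta> 1 f))
                            (\<lambda>z. comp_shift \<omega> (X f) z + ip (X f) (cchi_mult \<omega>) * u z)"
  shows "ae_eq (multiplier_defect \<theta> \<omega> u X (clark_U \<theta> 1 f)) (\<lambda>z. z * multiplier_defect \<theta> \<omega> u X f z)"
proof -
  define c where "c = ip f (cchi_mult \<theta>)"
  have "ae_eq (clark_U \<theta> 1 f) (\<lambda>z. z * f z + c * (1 - \<theta> z))"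
    using clark_U_ae_eq[OF th th0 f] unfolding c_def by simp
  moreover have "ae_eq (comp_shift \<omega> (X f)) (\<lambda>z. z * X f z - c * \<omega> z)"
    using comp_shift_ae_eq[OF om Xf] coeff unfolding c_def by simp
  moreover have "ae_eq (X (clark_U \<theta> 1 f)) (\<lambda>z. comp_shift \<omega> (X f) z + c * u z)"
    using intertwines coeff unfolding c_def by simp
  ultimately show ?thesis
    unfolding ae_eq_def
  proof eventually_elim
    case (elim z)
    show ?case unfolding multiplier_defect_def elim(3) elim(1) elim(2) by (simp add: algebra_simps)
  qed
qed

lemma multiplier_defect_divisible_by_z:
  assumes th: "inner_fun \<theta>" and om: "inner_fun \<omega>" and th0: "value_at_0 \<theta> = 0"
    and X: "bounded_op (model_space \<theta>) (model_space \<omega>) X"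
    and coeff: "\<forall>f \<in> model_space \<theta>. ip (X f) (cchi_mult \<omega>) = ip f (cchi_mult \<theta>)"
    and intertwines: "\<forall>f \<in> model_space \<theta>.
           ae_eq (X (clark_U \<theta> 1 f)) (\<lambda>z. comp_shift \<omega> (X f) z + ip (X f) (cchi_mult \<omega>) * u z)"
    and f: "f \<in> model_space \<theta>"
  shows "\<exists>g\<in>model_space \<theta>. ae_eq (multiplier_defect \<theta> \<omega> u X f)
                                    (\<lambda>z. z * multiplier_defect \<theta> \<omega> u X g z)"
proof -
  obtain g where g: "g \<in> model_space \<theta>" "ae_eq (clark_U \<theta> 1 g) f"
    using clark_U_surj[OF th th0 f] by blast
  have Ug: "clark_U \<theta> 1 g \<in> model_space \<theta>" using clark_U_ae_eq[OF th th0 g(1)] by simp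
  have "ae_eq (X (clark_U \<theta> 1 g)) (X f)"
    using X g(2) Ug f unfolding bounded_op_def by blast
  then have "ae_eq (multiplier_defect \<theta> \<omega> u X (clark_U \<theta> 1 g)) (multiplier_defect \<theta> \<omega> u X f)"
    using g(2) unfolding ae_eq_def multiplier_defect_def by eventually_elim simp
  moreover have "ae_eq (multiplier_defect \<theta> \<omega> u X (clark_U \<theta> 1 g))
                       (\<lambda>z. z * multiplier_defect \<theta> \<omega> u X g z)"
    using X g(1) coeff intertwines unfolding bounded_op_def
    by (intro multiplier_defect_clark_U[OF th om th0 g(1)]) auto
  ultimately show ?thesis using g(1) by (blast intro: ae_eq_trans ae_eq_sym)
qed

lemma AE_multiplier_defect_eq_0:
  assumes th: "inner_fun \<theta>" and om: "inner_fun \<omega>" and th0: "value_at_0 \<theta> = 0"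
    and u: "u \<in> model_space \<omega>" and X: "bounded_op (model_space \<theta>) (model_space \<omega>) X"
    and coeff: "\<forall>f \<in> model_space \<theta>. ip (X f) (cchi_mult \<omega>) = ip f (cchi_mult \<theta>)"
    and intertwines: "\<forall>f \<in> model_space \<theta>.
           ae_eq (X (clark_U \<theta> 1 f)) (\<lambda>z. comp_shift \<omega> (X f) z + ip (X f) (cchi_mult \<omega>) * u z)"
    and f: "f \<in> model_space \<theta>"
  shows "AE z in circ_measure. multiplier_defect \<theta> \<omega> u X f z = 0"
proof (rule AE_eq_0_if_divisible_by_z[where K="model_space \<theta>", OF _ _ _ f])
  have XK: "X f \<in> model_space \<omega>" if "f \<in> model_space \<theta>" for f
    using X that unfolding bounded_op_def by blast
  show "integrable circ_measure (multiplier_defect \<theta> \<omega> u X f)" if "f \<in> model_space \<theta>" for f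
    using that by (intro integrable_multiplier_defect[OF th om] model_space_L2[OF u] model_space_L2[OF XK]
                         model_space_L2)
  show "integral\<^sup>L circ_measure (\<lambda>z. multiplier_defect \<theta> \<omega> u X f z * z ^ k) = 0"
    if "f \<in> model_space \<theta>" "k > 0" for f k
    using that by (intro multiplier_defect_coeff[OF th om] model_space_hardy2[OF u]
                         model_space_hardy2[OF XK] model_space_hardy2)
qed (rule multiplier_defect_divisible_by_z[OF th om th0 X coeff intertwines])

theorem theorem3p5:
  fixes \<theta> \<omega> u :: "complex \<Rightarrow> complex"
    and X :: "(complex \<Rightarrow> complex) \<Rightarrow> (complex \<Rightarrow> complex)"
  assumes "inner_fun \<theta>" and "inner_fun \<omega>"
    and "value_at_0 \<theta> = 0" and "value_at_0 \<omega> = 0"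
    and "u \<in> model_space \<omega>"
    and "bounded_op (model_space \<theta>) (model_space \<omega>) X"
    and "\<forall>f \<in> model_space \<theta>. ip (X f) (cchi_mult \<omega>) = ip f (cchi_mult \<theta>)"
    and "\<forall>f \<in> model_space \<theta>.
           ae_eq (X (clark_U \<theta> 1 f))
                 (\<lambda>z. comp_shift \<omega> (X f) z + ip (X f) (cchi_mult \<omega>) * u z)"
  shows "(\<lambda>z. (u z - \<omega> z) / (1 - \<theta> z)) \<in> model_space \<omega> \<and>
         (\<forall>f \<in> model_space \<theta>. ae_eq (X f) (\<lambda>z. (u z - \<omega> z) / (1 - \<theta> z) * f z))"
proof -
  note th = assms(1) and om = assms(2) and th0 = assms(3) and u = assms(5) and X = assms(6)
  define g where "g z = (u z - \<omega> z) / (1 - \<theta> z)" for z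
  have Xf: "ae_eq (X f) (\<lambda>z. g z * f z)" if f: "f \<in> model_space \<theta>" for f
    unfolding ae_eq_def
    using AE_multiplier_defect_eq_0[OF th om th0 u X assms(7,8) f] AE_inner_fun_neq_1[OF th th0]
    by eventually_elim (simp add: multiplier_defect_def g_def field_simps)
  have one: "(\<lambda>z. 1) \<in> model_space \<theta>" by (rule model_space_const[OF th th0])
  have "g \<in> borel_measurable borel"
    unfolding g_def using L2_measurable[OF model_space_L2[OF u]] inner_fun_measurable[OF th]
      inner_fun_measurable[OF om] by measurable
  moreover have "X (\<lambda>z. 1) \<in> model_space \<omega>" using X one unfolding bounded_op_def by blast
  ultimately have "g \<in> model_space \<omega>"
    using model_space_ae_eq[OF om] Xf[OF one] by simp
  then show ?thesis using Xf unfolding g_def by blast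
qed

end
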